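(* Let $X\in\mathcal{L}_G^{1^*}(\Omega)$ and let $\{X_n\}_{n\ge1}$, $\{\tilde X_n\}_{n\ge1}$ be two sequences in $L^1_G(\Omega)$ with $X_n\downarrow X$ q.s. and $\tilde X_n\downarrow X$ q.s. Then for each $t\ge0$, \[\lim_{n\to\infty}\hat{\mathbb{E}}_t[X_n]=\lim_{n\to\infty}\hat{\mathbb{E}}_t[\tilde X_n]\quad\text{q.s.}\]
   Context: $\Omega=C_0^d(\mathbb{R}^+)$ is the space of continuous paths $\omega:[0,\infty)\to\mathbb{R}^d$ with $\omega_0=0$ (topology of uniform convergence on compacts), $B_t(\omega)=\omega_t$, $\mathcal F=\mathcal B(\Omega)$, $G:\mathbb{S}_d\to\mathbb{R}$ a monotone sublinear function on symmetric matrices, $\hat{\mathbb{E}}$ the $G$-expectation (under which $B$ is a $G$-Brownian motion) with conditional $G$-expectations $\hat{\mathbb{E}}_t$. $L^1_G(\Omega)$ (resp. $L^1_G(\Omega_t)$) is the completion of the bounded Lipschitz cylinder functions $\varphi(B_{t_1},\dots,B_{t_n})$ (resp. with $t_i\le t$) under $\hat{\mathbb{E}}[|\cdot|]$; $\hat{\mathbb{E}}_t:L^1_G(\Omega)\to L^1_G(\Omega_t)$ is the continuous extension. $\mathcal{P}$ is a weakly compact set of probability measures with $\hat{\mathbb{E}}[X]=\sup_{P\in\mathcal{P}}E_P[X]$ on cylinder functions, $c(A)=\sup_{P\in\mathcal{P}}P(A)$, q.s. means outside a set of capacity zero. $L^0(\Omega)$ is the set of $\mathcal{B}(\Omega)$-measurable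 maps $\Omega\to[-\infty,\infty]$, and $\mathcal{L}_G^{1^*}(\Omega)=\{X\in L^0(\Omega):\exists X_n\in L^1_G(\Omega),\ X_n\downarrow X\text{ q.s.}\}$. *)

theory Defs
  imports "HOL-Probability.Probability"
begin

text \<open>Canonical space: continuous paths in R^d started at 0 (extended by 0 to negative times),
  B_t(w) = w t.\<close>

type_synonym 'd path = "real \<Rightarrow> real^'d"

definition Omega :: "('d::finite) path set" where
  "Omega = {w. continuous_on UNIV w \<and> (\<forall>t\<le>0. w t = 0)}"

text \<open>Metric of uniform convergence on compacts.\<close>
definition path_dist :: "('d::finite) path \<Rightarrow> 'd path \<Rightarrow> real" where
  "path_dist w w' = (\<Sum>k. (1/2) ^ Suc k * min 1 (SUP t\<in>{0..real (Suc k)}. norm (w t - w' t)))"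

definition Omega_open :: "('d::finite) path set \<Rightarrow> bool" where
  "Omega_open U \<longleftrightarrow> U \<subseteq> Omega \<and>
     (\<forall>w\<in>U. \<exists>e>0. \<forall>w'\<in>Omega. path_dist w w' < e \<longrightarrow> w' \<in> U)"

definition Omega_borel :: "('d::finite) path measure" where
  "Omega_borel = sigma Omega (Collect Omega_open)"

definition bcont :: "(('d::finite) path \<Rightarrow> real) \<Rightarrow> bool" where
  "bcont f \<longleftrightarrow> (\<exists>M. \<forall>w\<in>Omega. \<bar>f w\<bar> \<le> M) \<and>
     (\<forall>w\<in>Omega. \<forall>e>0. \<exists>d>0. \<forall>w'\<in>Omega. path_dist w w' < d \<longrightarrow> \<bar>f w' - f w\<bar> < e)"

definition weak_conv :: "(nat \<Rightarrow> ('d::finite) path measure) \<Rightarrow> 'd path measure \<Rightarrow> bool" where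
  "weak_conv Ps P \<longleftrightarrow> (\<forall>f. bcont f \<longrightarrow> (\<lambda>n. \<integral>w. f w \<partial>Ps n) \<longlonglongrightarrow> (\<integral>w. f w \<partial>P))"

definition weakly_compact :: "('d::finite) path measure set \<Rightarrow> bool" where
  "weakly_compact PP \<longleftrightarrow> (\<forall>Ps::nat \<Rightarrow> _. (\<forall>n. Ps n \<in> PP) \<longrightarrow>
      (\<exists>r P. strict_mono r \<and> P \<in> PP \<and> weak_conv (Ps \<circ> r) P))"

definition prob_family :: "('d::finite) path measure set \<Rightarrow> bool" where
  "prob_family PP \<longleftrightarrow> (\<forall>P\<in>PP. prob_space P \<and> sets P = sets Omega_borel \<and> space P = Omega)"

definition cap :: "('d::finite) path measure set \<Rightarrow> 'd path set \<Rightarrow> real" where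
  "cap PP A = (SUP P\<in>PP. measure P A)"

definition qs :: "('d::finite) path measure set \<Rightarrow> ('d path \<Rightarrow> bool) \<Rightarrow> bool" where
  "qs PP Q \<longleftrightarrow> (\<exists>A\<in>sets Omega_borel. cap PP A = 0 \<and> (\<forall>w\<in>Omega - A. Q w))"

definition upE :: "('d::finite) path measure set \<Rightarrow> ('d path \<Rightarrow> ennreal) \<Rightarrow> ennreal" where
  "upE PP f = (SUP P\<in>PP. \<integral>\<^sup>+ w. f w \<partial>P)"

text \<open>Cylinder functions phi(B_{t_1},...,B_{t_n}); phi acts on the first n arguments.\<close>
definition cyl :: "nat \<Rightarrow> (nat \<Rightarrow> real) \<Rightarrow> ((nat \<Rightarrow> real^'d) \<Rightarrow> real) \<Rightarrow> ('d::finite) path \<Rightarrow> real" where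
  "cyl n ts phi w = phi (\<lambda>i. if i < n then w (ts i) else 0)"

definition blip_fun :: "nat \<Rightarrow> ((nat \<Rightarrow> real^'d::finite) \<Rightarrow> real) \<Rightarrow> bool" where
  "blip_fun n phi \<longleftrightarrow> (\<exists>M. \<forall>x. \<bar>phi x\<bar> \<le> M) \<and>
     (\<exists>L. \<forall>x y. \<bar>phi x - phi y\<bar> \<le> L * (\<Sum>i<n. norm (x i - y i)))"

definition clip_fun :: "nat \<Rightarrow> ((nat \<Rightarrow> real^'d::finite) \<Rightarrow> real) \<Rightarrow> bool" where
  "clip_fun n phi \<longleftrightarrow> (\<exists>C (m::nat). \<forall>x y. \<bar>phi x - phi y\<bar> \<le>
      C * (1 + (\<Sum>i<n. norm (x i)) ^ m + (\<Sum>i<n. norm (y i)) ^ m) * (\<Sum>i<n. norm (x i - y i)))"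

definition bLip_cyl :: "real set \<Rightarrow> (('d::finite) path \<Rightarrow> real) set" where
  "bLip_cyl T = {X. \<exists>n ts phi. (\<forall>i<n. ts i \<in> T) \<and> blip_fun n phi \<and> X = cyl n ts phi}"

definition Lip_cyl :: "(('d::finite) path \<Rightarrow> real) set" where
  "Lip_cyl = {X. \<exists>n ts phi. (\<forall>i<n. ts i \<ge> 0) \<and> clip_fun n phi \<and> X = cyl n ts phi}"

definition sublinear_exp :: "((('d::finite) path \<Rightarrow> real) \<Rightarrow> real) \<Rightarrow> bool" where
  "sublinear_exp E \<longleftrightarrow>
    (\<forall>X\<in>Lip_cyl. \<forall>Y\<in>Lip_cyl. (\<forall>w\<in>Omega. X w \<le> Y w) \<longrightarrow> E X \<le> E Y) \<and>
    (\<forall>c. E (\<lambda>_. c) = c) \<and>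
    (\<forall>X\<in>Lip_cyl. \<forall>Y\<in>Lip_cyl. E (\<lambda>w. X w + Y w) \<le> E X + E Y) \<and>
    (\<forall>X\<in>Lip_cyl. \<forall>l\<ge>0. E (\<lambda>w. l * X w) = l * E X)"

definition G_BM :: "((real^'d^'d) \<Rightarrow> real) \<Rightarrow> ((('d::finite) path \<Rightarrow> real) \<Rightarrow> real) \<Rightarrow> bool" where
  "G_BM G E \<longleftrightarrow>
    (\<forall>t\<ge>0. \<forall>s\<ge>0. \<forall>phi. clip_fun 1 phi \<longrightarrow>
        E (\<lambda>w. phi (\<lambda>i. if i = 0 then w (t + s) - w t else 0)) =
        E (\<lambda>w. phi (\<lambda>i. if i = 0 then w s else 0))) \<and>
    (\<forall>t\<ge>0. \<forall>s\<ge>0. \<forall>n ts phi. (\<forall>i<n. ts i \<in> {0..t}) \<and> clip_fun (Suc n) phi \<longrightarrow>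
        E (\<lambda>w. phi (\<lambda>i. if i < n then w (ts i) else if i = n then w (t + s) - w t else 0)) =
        E (\<lambda>w. (\<lambda>x. E (\<lambda>w'. phi (\<lambda>i. if i < n then x i else if i = n then w' (t + s) - w' t else 0)))
                 (\<lambda>i. if i < n then w (ts i) else 0))) \<and>
    (\<forall>t\<ge>0. \<forall>a. E (\<lambda>w. a \<bullet> w t) = 0 \<and> E (\<lambda>w. - (a \<bullet> w t)) = 0) \<and>
    ((\<lambda>t. E (\<lambda>w. norm (w t) ^ 3) / t) \<longlongrightarrow> 0) (at_right 0) \<and>
    (\<forall>A. transpose A = A \<longrightarrow> G A = 1/2 * E (\<lambda>w. w 1 \<bullet> (A *v w 1)))"

definition monotone_sublinear_G :: "((real^'d^'d) \<Rightarrow> real) \<Rightarrow> bool" where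
  "monotone_sublinear_G G \<longleftrightarrow>
    (\<forall>A B. transpose A = A \<and> transpose B = B \<longrightarrow>
       G (A + B) \<le> G A + G B \<and>
       ((\<forall>x. x \<bullet> (A *v x) \<le> x \<bullet> (B *v x)) \<longrightarrow> G A \<le> G B)) \<and>
    (\<forall>A l. transpose A = A \<and> l \<ge> 0 \<longrightarrow> G (l *\<^sub>R A) = l * G A)"

definition G_setting :: "((real^'d^'d) \<Rightarrow> real) \<Rightarrow> ((('d::finite) path \<Rightarrow> real) \<Rightarrow> real)
    \<Rightarrow> 'd path measure set \<Rightarrow> bool" where
  "G_setting G E PP \<longleftrightarrow> monotone_sublinear_G G \<and> sublinear_exp E \<and> G_BM G E \<and>
     prob_family PP \<and> weakly_compact PP \<and>
     (\<forall>X\<in>bLip_cyl {0..}. E X = (SUP P\<in>PP. \<integral>w. X w \<partial>P))"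

text \<open>L^1_G(Omega_T): closure (under E[|.|] = sup_P E_P|.|) of bounded Lipschitz cylinder functions.\<close>
definition L1G :: "('d::finite) path measure set \<Rightarrow> real set \<Rightarrow> ('d path \<Rightarrow> real) set" where
  "L1G PP T = {X. X \<in> borel_measurable Omega_borel \<and>
     (\<exists>Xk. (\<forall>k. Xk k \<in> bLip_cyl T) \<and>
        (\<lambda>k. upE PP (\<lambda>w. ennreal \<bar>Xk k w - X w\<bar>)) \<longlonglongrightarrow> 0)}"

definition decr_qs :: "('d::finite) path measure set \<Rightarrow> (nat \<Rightarrow> 'd path \<Rightarrow> real) \<Rightarrow> ('d path \<Rightarrow> ereal) \<Rightarrow> bool" where
  "decr_qs PP Xn X \<longleftrightarrow> qs PP (\<lambda>w. (\<forall>n. Xn (Suc n) w \<le> Xn n w) \<and> (\<lambda>n. ereal (Xn n w)) \<longlonglongrightarrow> X w)"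

definition L1G_star :: "('d::finite) path measure set \<Rightarrow> ('d path \<Rightarrow> ereal) set" where
  "L1G_star PP = {X. X \<in> borel_measurable Omega_borel \<and>
      (\<exists>Xn. (\<forall>n. Xn n \<in> L1G PP {0..}) \<and> decr_qs PP Xn X)}"

text \<open>Conditional G-expectation of a bounded Lipschitz cylinder function (Peng):
  for X = phi(B_{s_1},...,B_{s_m}, B_{r_1}-B_t,...,B_{r_k}-B_t), s_i <= t <= r_j,
  E_t[X] = psi(B_{s_1},...,B_{s_m}) with psi(x) = E[phi(x, B_{r_1}-B_t,...,B_{r_k}-B_t)].\<close>
definition cond_cyl :: "((('d::finite) path \<Rightarrow> real) \<Rightarrow> real) \<Rightarrow> real \<Rightarrow> ('d path \<Rightarrow> real) \<Rightarrow> ('d path \<Rightarrow> real) \<Rightarrow> bool" where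
  "cond_cyl E t X Y \<longleftrightarrow> (\<exists>m k s r phi.
     (\<forall>i<m. s i \<in> {0..t}) \<and> (\<forall>j<k. t \<le> r j) \<and> blip_fun (m + k) phi \<and>
     (\<forall>w\<in>Omega. X w = phi (\<lambda>i. if i < m then w (s i) else if i < m + k then w (r (i - m)) - w t else 0)) \<and>
     (\<forall>w\<in>Omega. Y w = E (\<lambda>w'. phi (\<lambda>i. if i < m then w (s i)
                                       else if i < m + k then w' (r (i - m)) - w' t else 0))))"

text \<open>Y is (a version of) E_t[X] for X in L^1_G(Omega): continuous extension of E_t.\<close>
definition cond_exp :: "((('d::finite) path \<Rightarrow> real) \<Rightarrow> real) \<Rightarrow> 'd path measure set \<Rightarrow> real
    \<Rightarrow> ('d path \<Rightarrow> real) \<Rightarrow> ('d path \<Rightarrow> real) \<Rightarrow> bool" where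
  "cond_exp E PP t X Y \<longleftrightarrow> X \<in> L1G PP {0..} \<and> Y \<in> borel_measurable Omega_borel \<and>
     (\<exists>Xk Yk. (\<forall>k. Xk k \<in> bLip_cyl {0..} \<and> cond_cyl E t (Xk k) (Yk k)) \<and>
        (\<lambda>k. upE PP (\<lambda>w. ennreal \<bar>Xk k w - X w\<bar>)) \<longlonglongrightarrow> 0 \<and>
        (\<lambda>k. upE PP (\<lambda>w. ennreal \<bar>Yk k w - Y w\<bar>)) \<longlonglongrightarrow> 0)"

end

theory Submission
  imports Defs
begin

text \<open>
  For bounded Lipschitz cylinder functionals, E_t is given by Peng's explicit formula: freeze the
  path up to time t and take the sublinear expectation over the increments after t. Subadditivity
  and the tower property E[E_t U] = E[U] (obtained from the independence of increments by
  induction on the number of times after t) give E_P[(E_t U - E_t V)^+] \<le> E[(U - V)^+] for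
  every P in PP, and this bound passes to the L^1_G-closure. Consequently E_t X_n decreases
  quasi-surely, and c P(E_t X_n > E_t X'_m + c for all n) \<le> E[(X_n - X'_m)^+] for fixed m and
  c > 0. As (X_n - X'_m)^+ decreases quasi-surely to 0, a Dini-type argument based on the weak
  compactness of PP sends the right-hand side to 0. So the limit of E_t X_n lies below every
  E_t X'_m and vice versa, and the two decreasing limits coincide quasi-surely.
\<close>

section \<open>Functionals depending Lipschitz-continuously on finitely many times\<close>

lemma sum_lipschitz_comp_le:
  fixes X :: "('i \<Rightarrow> 'v::real_normed_vector) \<Rightarrow> real"
  assumes "finite T" "L \<ge> 0" "\<And>u u'. \<bar>X u - X u'\<bar> \<le> L * (\<Sum>s\<in>T. norm (u s - u' s))"
    and "\<And>s. s \<in> T \<Longrightarrow> norm (u s - u' s) \<le> D"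
  shows "\<bar>X u - X u'\<bar> \<le> L * real (card T) * D"
proof -
  have "\<bar>X u - X u'\<bar> \<le> L * (\<Sum>s\<in>T. norm (u s - u' s))" by (rule assms(3))
  also have "\<dots> \<le> L * (real (card T) * D)"
    using assms by (intro mult_left_mono sum_bounded_above) auto
  finally show ?thesis by (simp add: mult.assoc)
qed

definition lip_on_times :: "real set \<Rightarrow> (('d::finite) path \<Rightarrow> real) \<Rightarrow> bool" where
  "lip_on_times T X \<longleftrightarrow> finite T \<and> (\<exists>M. \<forall>w. \<bar>X w\<bar> \<le> M) \<and>
     (\<exists>L\<ge>0. \<forall>w w'. \<bar>X w - X w'\<bar> \<le> L * (\<Sum>s\<in>T. norm (w s - w' s)))"

lemma lip_on_timesI:
  assumes "finite T" "\<And>w. \<bar>X w\<bar> \<le> M" "L \<ge> 0"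
    "\<And>w w'. \<bar>X w - X w'\<bar> \<le> L * (\<Sum>s\<in>T. norm (w s - w' s))"
  shows "lip_on_times T X"
  unfolding lip_on_times_def using assms by blast

lemma lip_on_times_finite: "lip_on_times T X \<Longrightarrow> finite T"
  unfolding lip_on_times_def by blast

lemma lip_on_times_mono:
  assumes "lip_on_times T X" "T \<subseteq> T'" "finite T'"
  shows "lip_on_times T' X"
proof -
  obtain M L where bnd: "\<And>w. \<bar>X w\<bar> \<le> M" "L \<ge> 0"
    "\<And>w w'. \<bar>X w - X w'\<bar> \<le> L * (\<Sum>s\<in>T. norm (w s - w' s))"
    using assms(1) unfolding lip_on_times_def by blast
  have "\<bar>X w - X w'\<bar> \<le> L * (\<Sum>s\<in>T'. norm (w s - w' s))" for w w'
  proof -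
    have "(\<Sum>s\<in>T. norm (w s - w' s)) \<le> (\<Sum>s\<in>T'. norm (w s - w' s))"
      by (rule sum_mono2) (use assms in auto)
    then show ?thesis using bnd by (meson mult_left_mono order_trans)
  qed
  then show ?thesis using assms(3) bnd by (intro lip_on_timesI)
qed

lemma lip_on_times_cong:
  assumes "lip_on_times T X" "\<forall>s\<in>T. a s = b s"
  shows "X a = X b"
proof -
  obtain L where "\<And>w w'. \<bar>X w - X w'\<bar> \<le> L * (\<Sum>s\<in>T. norm (w s - w' s))"
    using assms(1) unfolding lip_on_times_def by blast
  from this[of a b] show ?thesis using assms(2) by simp
qed

lemma lip_on_times_const: "finite T \<Longrightarrow> lip_on_times T (\<lambda>_. c)"
  by (rule lip_on_timesI[where M="\<bar>c\<bar>" and L=0]) auto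

lemma lip_on_times_add:
  assumes "lip_on_times T f" "lip_on_times T g"
  shows "lip_on_times T (\<lambda>w. f w + g w)"
proof -
  obtain M1 L1 where 1: "finite T" "\<And>w. \<bar>f w\<bar> \<le> M1" "L1 \<ge> 0"
    "\<And>w w'. \<bar>f w - f w'\<bar> \<le> L1 * (\<Sum>s\<in>T. norm (w s - w' s))"
    using assms(1) unfolding lip_on_times_def by blast
  obtain M2 L2 where 2: "\<And>w. \<bar>g w\<bar> \<le> M2" "L2 \<ge> 0"
    "\<And>w w'. \<bar>g w - g w'\<bar> \<le> L2 * (\<Sum>s\<in>T. norm (w s - w' s))"
    using assms(2) unfolding lip_on_times_def by blast
  show ?thesis
  proof (rule lip_on_timesI[OF 1(1), where M="M1 + M2" and L="L1 + L2"])
    show "\<bar>f w + g w\<bar> \<le> M1 + M2" for w using 1(2)[of w] 2(1)[of w] by linarith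
    show "0 \<le> L1 + L2" using 1(3) 2(2) by simp
    fix w w'
    have "\<bar>(f w + g w) - (f w' + g w')\<bar> \<le> \<bar>f w - f w'\<bar> + \<bar>g w - g w'\<bar>" by linarith
    also have "\<dots> \<le> (L1 + L2) * (\<Sum>s\<in>T. norm (w s - w' s))"
      using 1(4)[of w w'] 2(3)[of w w'] by (simp add: distrib_right)
    finally show "\<bar>(f w + g w) - (f w' + g w')\<bar> \<le> (L1 + L2) * (\<Sum>s\<in>T. norm (w s - w' s))" .
  qed
qed

lemma lip_on_times_comp_lipschitz:
  assumes "lip_on_times T f" and "\<And>x y. \<bar>h x - h y\<bar> \<le> \<bar>x - y\<bar>"
  shows "lip_on_times T (\<lambda>w. h (f w))"
proof -
  obtain M L where bnd: "finite T" "\<And>w. \<bar>f w\<bar> \<le> M" "L \<ge> 0"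
    "\<And>w w'. \<bar>f w - f w'\<bar> \<le> L * (\<Sum>s\<in>T. norm (w s - w' s))"
    using assms(1) unfolding lip_on_times_def by blast
  show ?thesis
  proof (rule lip_on_timesI[OF bnd(1) _ bnd(3), where M="M + \<bar>h 0\<bar>"])
    show "\<bar>h (f w)\<bar> \<le> M + \<bar>h 0\<bar>" for w using assms(2)[of "f w" 0] bnd(2)[of w] by linarith
    show "\<bar>h (f w) - h (f w')\<bar> \<le> L * (\<Sum>s\<in>T. norm (w s - w' s))" for w w'
      using assms(2)[of "f w" "f w'"] bnd(4)[of w w'] by linarith
  qed
qed

lemma finite_enumerationE:
  assumes "finite T"
  obtains ts n idx where "bij_betw ts {..<n::nat} T" "bij_betw idx T {..<n}"
    "\<forall>s\<in>T. ts (idx s) = s"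
proof -
  obtain xs where xs: "set xs = T" "distinct xs" using finite_distinct_list[OF assms] by blast
  have bij: "bij_betw (\<lambda>i. xs ! i) {..<length xs} T" using xs by (intro bij_betw_nth) auto
  show ?thesis
    by (rule that[OF bij bij_betw_inv_into[OF bij]]) (use bij in \<open>simp add: bij_betw_inv_into_right\<close>)
qed

lemma blip_fun_comp:
  assumes X: "lip_on_times T X" and C: "C \<ge> 0"
    and \<gamma>: "\<And>x y s. s \<in> T \<Longrightarrow> norm (\<gamma> x s - \<gamma> y s) \<le> C * (\<Sum>i<n. norm (x i - y i))"
  shows "blip_fun n (\<lambda>x. X (\<gamma> x))"
proof -
  obtain M L where bnd: "\<forall>w. \<bar>X w\<bar> \<le> M" "L \<ge> 0"
    "\<forall>w w'. \<bar>X w - X w'\<bar> \<le> L * (\<Sum>s\<in>T. norm (w s - w' s))"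
    using X unfolding lip_on_times_def by blast
  have "\<bar>X (\<gamma> x) - X (\<gamma> y)\<bar> \<le> (L * real (card T) * C) * (\<Sum>i<n. norm (x i - y i))" for x y
    using sum_lipschitz_comp_le[OF lip_on_times_finite[OF X] bnd(2) bnd(3)[rule_format] \<gamma>]
    by (simp add: mult.assoc)
  then show ?thesis using bnd(1) unfolding blip_fun_def by blast
qed

lemma lip_on_times_comp_blip_fun:
  assumes phi: "blip_fun n phi" and S: "finite S" and C: "C \<ge> 0"
    and z: "\<And>a b i. i < n \<Longrightarrow> norm (z a i - z b i) \<le> C * (\<Sum>s\<in>S. norm (a s - b s))"
  shows "lip_on_times S (\<lambda>w. phi (z w))"
proof -
  obtain M L where bnd: "\<forall>x. \<bar>phi x\<bar> \<le> M" "\<forall>x y. \<bar>phi x - phi y\<bar> \<le> L * (\<Sum>i<n. norm (x i - y i))"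
    using phi unfolding blip_fun_def by blast
  have lip: "\<bar>phi x - phi y\<bar> \<le> max L 0 * (\<Sum>i<n. norm (x i - y i))" for x y
    using bnd(2)[rule_format, of x y] by (smt (verit) mult_right_mono sum_nonneg norm_ge_zero)
  show ?thesis
  proof (rule lip_on_timesI[OF S, where M=M and L="max L 0 * real n * C"])
    show "\<bar>phi (z w)\<bar> \<le> M" for w using bnd(1) by blast
    show "0 \<le> max L 0 * real n * C" using C by simp
    show "\<bar>phi (z a) - phi (z b)\<bar> \<le> max L 0 * real n * C * (\<Sum>s\<in>S. norm (a s - b s))" for a b
      using sum_lipschitz_comp_le[of "{..<n}", OF _ _ lip, of "z a" "z b"] z
      by (simp add: mult.assoc)
  qed
qed

lemma lip_on_times_imp_bLip_cyl:
  fixes X :: "('d::finite) path \<Rightarrow> real"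
  assumes X: "lip_on_times T X" and T: "T \<subseteq> S"
  shows "X \<in> bLip_cyl S"
proof -
  obtain ts n idx where ts: "bij_betw ts {..<n::nat} T" and idx: "bij_betw idx T {..<n}"
    and inv: "\<forall>s\<in>T. ts (idx s) = s"
    by (rule finite_enumerationE[OF lip_on_times_finite[OF X]])
  have idx_lt: "s \<in> T \<Longrightarrow> idx s < n" for s using idx by (auto dest: bij_betwE)
  define \<gamma> :: "(nat \<Rightarrow> real^'d) \<Rightarrow> 'd path" where "\<gamma> = (\<lambda>z s. if s \<in> T then z (idx s) else 0)"
  have "X w = cyl n ts (\<lambda>z. X (\<gamma> z)) w" for w
    unfolding cyl_def \<gamma>_def by (rule lip_on_times_cong[OF X]) (simp add: idx_lt inv)
  moreover have "blip_fun n (\<lambda>z. X (\<gamma> z))"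
    by (rule blip_fun_comp[OF X, of 1]) (auto simp: \<gamma>_def idx_lt intro: member_le_sum)
  moreover have "\<forall>i<n. ts i \<in> S" using ts T by (auto dest: bij_betwE)
  ultimately show ?thesis unfolding bLip_cyl_def by blast
qed

lemma bLip_cyl_imp_lip_on_times:
  assumes "X \<in> bLip_cyl S"
  obtains T where "T \<subseteq> S" "lip_on_times T X"
proof -
  obtain n ts phi where X: "\<forall>i<n. ts i \<in> S" "blip_fun n phi" "X = cyl n ts phi"
    using assms unfolding bLip_cyl_def by blast
  have "lip_on_times (ts ` {..<n}) (\<lambda>w. phi (\<lambda>i. if i < n then w (ts i) else 0))"
    by (rule lip_on_times_comp_blip_fun[OF X(2), of _ 1]) (auto intro: member_le_sum)
  then show ?thesis using that[of "ts ` {..<n}"] X unfolding cyl_def by auto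
qed

lemma blip_fun_imp_clip_fun: "blip_fun n phi \<Longrightarrow> clip_fun n phi"
proof -
  assume "blip_fun n phi"
  then obtain L where L: "\<forall>x y. \<bar>phi x - phi y\<bar> \<le> L * (\<Sum>i<n. norm (x i - y i))"
    unfolding blip_fun_def by blast
  have "\<bar>phi x - phi y\<bar> \<le> max L 0 * (1 + (\<Sum>i<n. norm (x i)) ^ 0 + (\<Sum>i<n. norm (y i)) ^ 0)
      * (\<Sum>i<n. norm (x i - y i))" for x y
  proof -
    have "\<bar>phi x - phi y\<bar> \<le> L * (\<Sum>i<n. norm (x i - y i))" using L by blast
    also have "\<dots> \<le> (max L 0 * 3) * (\<Sum>i<n. norm (x i - y i))"
      by (rule mult_right_mono[OF _ sum_nonneg]) auto
    finally show ?thesis by simp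
  qed
  then show "clip_fun n phi" unfolding clip_fun_def by blast
qed

lemma bLip_cyl_subset_Lip_cyl: "bLip_cyl {0..} \<subseteq> Lip_cyl"
  unfolding bLip_cyl_def Lip_cyl_def by (auto intro: blip_fun_imp_clip_fun)

lemma bLip_cyl_common_times:
  assumes "f \<in> bLip_cyl S" "g \<in> bLip_cyl S"
  obtains T where "T \<subseteq> S" "lip_on_times T f" "lip_on_times T g"
proof -
  obtain T1 T2 where "T1 \<subseteq> S" "lip_on_times T1 f" "T2 \<subseteq> S" "lip_on_times T2 g"
    using assms by (metis bLip_cyl_imp_lip_on_times)
  then show ?thesis
    using that[of "T1 \<union> T2"] lip_on_times_mono[of T1 f "T1 \<union> T2"] lip_on_times_mono[of T2 g "T1 \<union> T2"]
    by (auto dest: lip_on_times_finite)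
qed

lemma bLip_cyl_add:
  "f \<in> bLip_cyl S \<Longrightarrow> g \<in> bLip_cyl S \<Longrightarrow> (\<lambda>w. f w + g w) \<in> bLip_cyl S"
proof -
  assume "f \<in> bLip_cyl S" "g \<in> bLip_cyl S"
  then obtain T where "T \<subseteq> S" "lip_on_times T f" "lip_on_times T g" by (rule bLip_cyl_common_times)
  then show ?thesis by (intro lip_on_times_imp_bLip_cyl[OF lip_on_times_add])
qed

lemma bLip_cyl_comp_lipschitz:
  "f \<in> bLip_cyl S \<Longrightarrow> (\<And>x y. \<bar>h x - h y\<bar> \<le> \<bar>x - y\<bar>) \<Longrightarrow> (\<lambda>w. h (f w)) \<in> bLip_cyl S"
proof -
  assume f: "f \<in> bLip_cyl S" and h: "\<And>x y. \<bar>h x - h y\<bar> \<le> \<bar>x - y\<bar>"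
  obtain T where "T \<subseteq> S" "lip_on_times T f" using f by (rule bLip_cyl_imp_lip_on_times)
  then show ?thesis by (intro lip_on_times_imp_bLip_cyl[OF lip_on_times_comp_lipschitz] h)
qed

lemma bLip_cyl_const: "(\<lambda>_. c) \<in> bLip_cyl S"
  by (rule lip_on_times_imp_bLip_cyl[OF lip_on_times_const[of "{}"]]) auto

lemma bLip_cyl_diff:
  assumes "f \<in> bLip_cyl S" "g \<in> bLip_cyl S"
  shows "(\<lambda>w. f w - g w) \<in> bLip_cyl S"
  using bLip_cyl_add[OF assms(1) bLip_cyl_comp_lipschitz[OF assms(2), of uminus]] by simp

lemma bLip_cyl_pos_part: "f \<in> bLip_cyl S \<Longrightarrow> (\<lambda>w. max (f w) 0) \<in> bLip_cyl S"
  by (rule bLip_cyl_comp_lipschitz) auto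

lemma bLip_cyl_bounded:
  assumes "X \<in> bLip_cyl S" obtains M where "\<forall>w. \<bar>X w\<bar> \<le> M"
proof -
  obtain T where "lip_on_times T X" using assms by (rule bLip_cyl_imp_lip_on_times)
  then show ?thesis using that unfolding lip_on_times_def by blast
qed

section \<open>Sublinear expectation and Peng's conditional expectation\<close>

lemma sublinear_exp_mono:
  assumes "sublinear_exp E" "f \<in> bLip_cyl {0..}" "g \<in> bLip_cyl {0..}" "\<forall>w\<in>Omega. f w \<le> g w"
  shows "E f \<le> E g"
  using assms bLip_cyl_subset_Lip_cyl unfolding sublinear_exp_def by blast

lemma sublinear_exp_cong:
  assumes "sublinear_exp E" "f \<in> bLip_cyl {0..}" "g \<in> bLip_cyl {0..}" "\<forall>w\<in>Omega. f w = g w"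
  shows "E f = E g"
  using sublinear_exp_mono[OF assms(1,2,3)] sublinear_exp_mono[OF assms(1,3,2)] assms(4)
  by (simp add: order_antisym)

lemma sublinear_exp_const: "sublinear_exp E \<Longrightarrow> E (\<lambda>_. c) = c"
  unfolding sublinear_exp_def by blast

lemma sublinear_exp_add:
  assumes "sublinear_exp E" "f \<in> bLip_cyl {0..}" "g \<in> bLip_cyl {0..}"
  shows "E (\<lambda>w. f w + g w) \<le> E f + E g"
  using assms bLip_cyl_subset_Lip_cyl unfolding sublinear_exp_def by blast

lemma sublinear_exp_abs_diff_le:
  assumes E: "sublinear_exp E" and "f \<in> bLip_cyl {0..}" "g \<in> bLip_cyl {0..}"
    and "\<forall>w\<in>Omega. \<bar>f w - g w\<bar> \<le> c"
  shows "\<bar>E f - E g\<bar> \<le> c"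
proof -
  have "E f \<le> E g + c" if "f \<in> bLip_cyl {0..}" "g \<in> bLip_cyl {0..}" "\<forall>w\<in>Omega. f w \<le> g w + c"
    for f g
  proof -
    have "E f \<le> E (\<lambda>w. g w + c)"
      using that E by (intro sublinear_exp_mono bLip_cyl_add bLip_cyl_const) auto
    also have "\<dots> \<le> E g + E (\<lambda>_. c)" using that E by (intro sublinear_exp_add bLip_cyl_const)
    finally show ?thesis using sublinear_exp_const[OF E] by simp
  qed
  moreover have "\<forall>w\<in>Omega. f w \<le> g w + c" "\<forall>w\<in>Omega. g w \<le> f w + c"
    using assms(4) by (auto simp: abs_le_iff)
  ultimately show ?thesis using assms(2,3) by (smt (verit))
qed

definition splice :: "real \<Rightarrow> ('d::finite) path \<Rightarrow> 'd path \<Rightarrow> 'd path" where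
  "splice t w v = (\<lambda>s. w (min s t) + (v (max s t) - v t))"

definition cexp :: "((('d::finite) path \<Rightarrow> real) \<Rightarrow> real) \<Rightarrow> real \<Rightarrow> ('d path \<Rightarrow> real) \<Rightarrow> 'd path \<Rightarrow> real" where
  "cexp E t X = (\<lambda>w. E (\<lambda>v. X (splice t w v)))"

lemma splice_in_Omega:
  assumes "t \<ge> 0" "w \<in> Omega" "v \<in> Omega"
  shows "splice t w v \<in> Omega"
proof -
  have cw: "continuous_on UNIV w" and cv: "continuous_on UNIV v" using assms unfolding Omega_def by auto
  have "continuous_on UNIV (\<lambda>s. w (min s t))"
    by (rule continuous_on_compose2[OF cw]) (auto intro!: continuous_intros)
  moreover have "continuous_on UNIV (\<lambda>s. v (max s t))"
    by (rule continuous_on_compose2[OF cv]) (auto intro!: continuous_intros)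
  ultimately have "continuous_on UNIV (splice t w v)" unfolding splice_def
    by (intro continuous_intros) auto
  moreover have "splice t w v s = 0" if "s \<le> 0" for s
    using assms that unfolding splice_def Omega_def by (auto simp: min_def max_def)
  ultimately show ?thesis unfolding Omega_def by auto
qed

lemma splice_splice:
  assumes "t \<le> t'"
  shows "splice t' (splice t w v) u = splice t w (splice t' v u)"
  unfolding splice_def using assms by (auto simp: min_def max_def fun_eq_iff)

lemma lip_on_times_splice:
  assumes "lip_on_times T X"
  shows "lip_on_times ({s\<in>T. s > t} \<union> {t}) (\<lambda>v. X (splice t w v))"
proof -
  obtain M L where bnd: "\<forall>w. \<bar>X w\<bar> \<le> M" "L \<ge> 0"
    "\<forall>w w'. \<bar>X w - X w'\<bar> \<le> L * (\<Sum>s\<in>T. norm (w s - w' s))"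
    using assms unfolding lip_on_times_def by blast
  define T' where "T' = {s\<in>T. s > t} \<union> {t}"
  have finT': "finite T'" unfolding T'_def using lip_on_times_finite[OF assms] by auto
  show ?thesis unfolding T'_def[symmetric]
  proof (rule lip_on_timesI[OF finT', where M=M and L="L * (real (card T) * 2)"])
    show "\<bar>X (splice t w v)\<bar> \<le> M" for v using bnd by blast
    show "0 \<le> L * (real (card T) * 2)" using bnd by auto
    fix a b
    have term_le: "norm (splice t w a s - splice t w b s) \<le> 2 * (\<Sum>s\<in>T'. norm (a s - b s))"
      if "s \<in> T" for s
    proof (cases "s \<le> t")
      case True
      then show ?thesis unfolding splice_def by (auto intro: sum_nonneg)
    next
      case False
      then have "s \<in> T'" "t \<in> T'" using that unfolding T'_def by auto
      then have "norm (a s - b s) \<le> (\<Sum>s\<in>T'. norm (a s - b s))"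
        and "norm (a t - b t) \<le> (\<Sum>s\<in>T'. norm (a s - b s))"
        using finT' by (auto intro!: member_le_sum)
      moreover have "splice t w a s - splice t w b s = (a s - b s) - (a t - b t)"
        using False unfolding splice_def by (auto simp: max_def min_def)
      ultimately show ?thesis by (smt (verit) norm_triangle_ineq4)
    qed
    from sum_lipschitz_comp_le[OF lip_on_times_finite[OF assms] bnd(2) bnd(3)[rule_format] term_le]
    show "\<bar>X (splice t w a) - X (splice t w b)\<bar> \<le> L * (real (card T) * 2) * (\<Sum>s\<in>T'. norm (a s - b s))"
      by (simp add: algebra_simps)
  qed
qed

lemma splice_in_bLip_cyl:
  assumes "X \<in> bLip_cyl {0..}" "t \<ge> 0"
  shows "(\<lambda>v. X (splice t w v)) \<in> bLip_cyl {0..}"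
proof -
  obtain T where "T \<subseteq> {0..}" "lip_on_times T X" using assms(1) by (rule bLip_cyl_imp_lip_on_times)
  then show ?thesis
    using assms(2) by (intro lip_on_times_imp_bLip_cyl[OF lip_on_times_splice]) auto
qed

lemma lip_on_times_cexp:
  fixes X :: "('d::finite) path \<Rightarrow> real"
  assumes E: "sublinear_exp E" and X: "lip_on_times T X" "T \<subseteq> {0..}" and t: "t \<ge> 0"
  shows "lip_on_times ({s\<in>T. s \<le> t} \<union> {t}) (cexp E t X)"
proof -
  obtain M L where bnd: "\<forall>w. \<bar>X w\<bar> \<le> M" "L \<ge> 0"
    "\<forall>w w'. \<bar>X w - X w'\<bar> \<le> L * (\<Sum>s\<in>T. norm (w s - w' s))"
    using X unfolding lip_on_times_def by blast
  define T' where "T' = {s\<in>T. s \<le> t} \<union> {t}"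
  have finT': "finite T'" unfolding T'_def using lip_on_times_finite[OF X(1)] by auto
  have spl: "(\<lambda>v. X (splice t w v)) \<in> bLip_cyl {0..}" for w
    using X t by (intro splice_in_bLip_cyl lip_on_times_imp_bLip_cyl)
  show ?thesis unfolding T'_def[symmetric]
  proof (rule lip_on_timesI[OF finT', where M=M and L="L * real (card T)"])
    fix w
    have "\<bar>E (\<lambda>v. X (splice t w v)) - E (\<lambda>_. 0)\<bar> \<le> M"
      using bnd by (intro sublinear_exp_abs_diff_le[OF E spl bLip_cyl_const]) auto
    then show "\<bar>cexp E t X w\<bar> \<le> M" unfolding cexp_def using sublinear_exp_const[OF E] by simp
  next
    show "0 \<le> L * real (card T)" using bnd by auto
  next
    fix a b :: "'d path"
    have term_le: "norm (splice t a v s - splice t b v s) \<le> (\<Sum>s\<in>T'. norm (a s - b s))"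
      if "s \<in> T" for s v
    proof -
      have "min s t \<in> T'" using that unfolding T'_def by (auto simp: min_def)
      then have "norm (a (min s t) - b (min s t)) \<le> (\<Sum>s\<in>T'. norm (a s - b s))"
        using finT' by (auto intro!: member_le_sum)
      then show ?thesis unfolding splice_def by simp
    qed
    have "\<bar>X (splice t a v) - X (splice t b v)\<bar> \<le> L * real (card T) * (\<Sum>s\<in>T'. norm (a s - b s))" for v
      by (rule sum_lipschitz_comp_le[OF lip_on_times_finite[OF X(1)] bnd(2) bnd(3)[rule_format] term_le])
    from sublinear_exp_abs_diff_le[OF E spl spl] this
    show "\<bar>cexp E t X a - cexp E t X b\<bar> \<le> L * real (card T) * (\<Sum>s\<in>T'. norm (a s - b s))"
      unfolding cexp_def by blast
  qed
qed

lemma cexp_in_bLip_cyl: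
  assumes "sublinear_exp E" "X \<in> bLip_cyl {0..}" "t \<ge> 0"
  shows "cexp E t X \<in> bLip_cyl {0..}"
proof -
  obtain T where "T \<subseteq> {0..}" "lip_on_times T X" using assms(2) by (rule bLip_cyl_imp_lip_on_times)
  then show ?thesis
    using assms by (intro lip_on_times_imp_bLip_cyl[OF lip_on_times_cexp]) auto
qed

lemma G_BM_increment_independent:
  assumes "G_BM G E" "t \<ge> 0" "s \<ge> 0" "\<forall>i<n. ts i \<in> {0..t}" "clip_fun (Suc n) phi"
  shows "E (\<lambda>w. phi (\<lambda>i. if i < n then w (ts i) else if i = n then w (t + s) - w t else 0)) =
    E (\<lambda>w. E (\<lambda>w'. phi (\<lambda>i. if i < n then w (ts i) else if i = n then w' (t + s) - w' t else 0)))"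
proof -
  have "E (\<lambda>w. phi (\<lambda>i. if i < n then w (ts i) else if i = n then w (t + s) - w t else 0)) =
    E (\<lambda>w. E (\<lambda>w'. phi (\<lambda>i. if i < n then (if i < n then w (ts i) else 0)
                             else if i = n then w' (t + s) - w' t else 0)))"
    using assms unfolding G_BM_def by blast
  then show ?thesis by (simp cong: if_cong)
qed

lemma sublinear_exp_cexp_last_time:
  fixes X :: "('d::finite) path \<Rightarrow> real"
  assumes E: "sublinear_exp E" and G: "G_BM G E" and X: "lip_on_times T X"
    and T: "T \<subseteq> {0..t'} \<union> {r}" and t': "t' \<ge> 0" and r: "r > t'"
  shows "E (cexp E t' X) = E X"
proof -
  define T2 where "T2 = (T - {r}) \<union> {t'}"
  have T2: "finite T2" "T2 \<subseteq> {0..t'}" "t' \<in> T2"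
    unfolding T2_def using T t' lip_on_times_finite[OF X] by auto
  obtain ts n idx where ts: "bij_betw ts {..<n::nat} T2" and idx: "bij_betw idx T2 {..<n}"
    and inv: "\<forall>s\<in>T2. ts (idx s) = s"
    by (rule finite_enumerationE[OF T2(1)])
  have idx_lt: "s \<in> T2 \<Longrightarrow> idx s < n" for s using idx by (auto dest: bij_betwE)
  have T_cases: "s \<in> T \<Longrightarrow> s = r \<or> (s \<in> T2 \<and> s \<le> t')" for s using T unfolding T2_def by auto
  text \<open>Coordinates 0..n-1 carry the path at the times of T2, coordinate n the increment
    from t' to r, which is independent of them.\<close>
  define \<gamma> :: "(nat \<Rightarrow> real^'d) \<Rightarrow> 'd path" where
    "\<gamma> = (\<lambda>z s. if s = r then z (idx t') + z n else if s \<in> T2 then z (idx s) else 0)"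
  define phi where "phi = (\<lambda>z. X (\<gamma> z))"
  have \<gamma>_lip: "norm (\<gamma> x s - \<gamma> y s) \<le> 2 * (\<Sum>i<Suc n. norm (x i - y i))" if "s \<in> T" for x y s
  proof -
    have coord_le: "i < Suc n \<Longrightarrow> norm (x i - y i) \<le> (\<Sum>i<Suc n. norm (x i - y i))" for i
      by (rule member_le_sum) auto
    show ?thesis
    proof (cases "s = r")
      case True
      have "norm (\<gamma> x s - \<gamma> y s) = norm ((x (idx t') - y (idx t')) + (x n - y n))"
        unfolding \<gamma>_def using True by (simp add: algebra_simps)
      also have "\<dots> \<le> norm (x (idx t') - y (idx t')) + norm (x n - y n)" by (rule norm_triangle_ineq)
      finally show ?thesis using coord_le[of "idx t'"] coord_le[of n] idx_lt[OF T2(3)] by simp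
    next
      case False
      then have "s \<in> T2" using T_cases that by blast
      then have "norm (\<gamma> x s - \<gamma> y s) = norm (x (idx s) - y (idx s))"
        unfolding \<gamma>_def using False by simp
      moreover have "norm (x (idx s) - y (idx s)) \<le> (\<Sum>i<Suc n. norm (x i - y i))"
        using coord_le[of "idx s"] idx_lt[OF \<open>s \<in> T2\<close>] by simp
      ultimately show ?thesis using norm_ge_zero[of "x (idx s) - y (idx s)"] by linarith
    qed
  qed
  have "blip_fun (Suc n) phi" unfolding phi_def by (rule blip_fun_comp[OF X _ \<gamma>_lip]) simp
  moreover have "\<forall>i<n. ts i \<in> {0..t'}" using bij_betwE[OF ts] T2(2) by blast
  ultimately have indep:
    "E (\<lambda>w. phi (\<lambda>i. if i < n then w (ts i) else if i = n then w (t' + (r - t')) - w t' else 0)) =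
     E (\<lambda>w. E (\<lambda>w'. phi (\<lambda>i. if i < n then w (ts i) else if i = n then w' (t' + (r - t')) - w' t' else 0)))"
    using t' r by (intro G_BM_increment_independent[OF G] blip_fun_imp_clip_fun) auto
  have "phi (\<lambda>i. if i < n then w (ts i) else if i = n then w (t' + (r - t')) - w t' else 0) = X w" for w
    unfolding phi_def \<gamma>_def
    by (rule lip_on_times_cong[OF X]) (use T_cases inv idx_lt T2(3) in auto)
  moreover have "phi (\<lambda>i. if i < n then w (ts i) else if i = n then w' (t' + (r - t')) - w' t' else 0)
      = X (splice t' w w')" for w w'
    unfolding phi_def \<gamma>_def
    by (rule lip_on_times_cong[OF X]) (use inv idx_lt T2(3) r in \<open>auto simp: splice_def min_def max_def dest: T_cases\<close>)
  ultimately show ?thesis using indep unfolding cexp_def by simp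
qed

lemma cexp_eq_self:
  assumes E: "sublinear_exp E" and X: "lip_on_times T X" and T: "\<forall>s\<in>T. s \<le> t"
  shows "cexp E t X = X"
proof
  fix w
  have "X (splice t w v) = X w" for v
    by (rule lip_on_times_cong[OF X]) (use T in \<open>auto simp: splice_def min_def max_def\<close>)
  then show "cexp E t X w = X w" unfolding cexp_def using sublinear_exp_const[OF E] by simp
qed

lemma cexp_cexp_last_time:
  fixes X :: "('d::finite) path \<Rightarrow> real"
  assumes E: "sublinear_exp E" and G: "G_BM G E" and X: "lip_on_times T X"
    and T: "T \<subseteq> {0..t'} \<union> {r}" and t: "0 \<le> t" "t \<le> t'" and r: "t' < r"
  shows "cexp E t (cexp E t' X) = cexp E t X"
proof
  fix w
  have Xw: "lip_on_times ({s\<in>T. s > t} \<union> {t}) (\<lambda>v. X (splice t w v))"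
    by (rule lip_on_times_splice[OF X])
  have Tw: "{s\<in>T. s > t} \<union> {t} \<subseteq> {0..t'} \<union> {r}" using T t by auto
  have "E (cexp E t' (\<lambda>v. X (splice t w v))) = E (\<lambda>v. X (splice t w v))"
    using sublinear_exp_cexp_last_time[OF E G Xw Tw] t r by simp
  then show "cexp E t (cexp E t' X) w = cexp E t X w"
    unfolding cexp_def by (simp only: splice_splice[OF t(2)])
qed

lemma tower_property_card:
  fixes X :: "('d::finite) path \<Rightarrow> real"
  assumes E: "sublinear_exp E" and G: "G_BM G E" and t: "t \<ge> 0"
  shows "lip_on_times T X \<Longrightarrow> T \<subseteq> {0..} \<Longrightarrow> card {s\<in>T. s > t} = k \<Longrightarrow> E (cexp E t X) = E X"
proof (induction k arbitrary: T X)
  case 0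
  then have "\<forall>s\<in>T. s \<le> t" using lip_on_times_finite by fastforce
  then show ?case using cexp_eq_self[OF E "0.prems"(1)] by simp
next
  case (Suc k)
  note X = Suc.prems(1) and T0 = Suc.prems(2)
  define F where "F = {s\<in>T. s > t}"
  have F: "finite F" "card F = Suc k" unfolding F_def using Suc.prems lip_on_times_finite[OF X] by auto
  text \<open>Peel off the last time r of X after t; t' is the time of X preceding r, or t itself.\<close>
  define r where "r = Max F"
  have r: "r \<in> F" "\<And>s. s \<in> F \<Longrightarrow> s \<le> r" unfolding r_def using F by (auto intro: Max_in)
  define t' where "t' = Max ({t} \<union> {s\<in>T. s < r})"
  have fin: "finite ({t} \<union> {s\<in>T. s < r})" using lip_on_times_finite[OF X] by simp
  have t': "t' \<in> {t} \<union> {s\<in>T. s < r}" "\<And>s. s \<in> {t} \<union> {s\<in>T. s < r} \<Longrightarrow> s \<le> t'"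
    unfolding t'_def by (rule Max_in[OF fin], simp) (rule Max_ge[OF fin])
  have tt': "t \<le> t'" "t' < r" "t' \<ge> 0" using t'(1) t'(2)[of t] r(1) t unfolding F_def by auto
  have T: "T \<subseteq> {0..t'} \<union> {r}"
  proof
    fix s assume "s \<in> T"
    then show "s \<in> {0..t'} \<union> {r}"
      using t'(2)[of s] r(2)[of s] T0 tt' unfolding F_def by (cases "s < r") force+
  qed
  define T2 where "T2 = {s\<in>T. s \<le> t'} \<union> {t'}"
  have X2: "lip_on_times T2 (cexp E t' X)" "T2 \<subseteq> {0..}"
    unfolding T2_def using lip_on_times_cexp[OF E X T0 tt'(3)] T0 tt' by auto
  have "{s\<in>T2. s > t} = F - {r}"
    using t' r(2) tt' unfolding T2_def F_def by (force simp: not_less)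
  then have "card {s\<in>T2. s > t} = k" using F r(1) by simp
  then have "E (cexp E t (cexp E t' X)) = E (cexp E t' X)" by (rule Suc.IH[OF X2])
  also have "cexp E t (cexp E t' X) = cexp E t X"
    using tt' t by (intro cexp_cexp_last_time[OF E G X T]) auto
  also have "E (cexp E t' X) = E X"
    using tt' by (intro sublinear_exp_cexp_last_time[OF E G X T]) auto
  finally show ?case .
qed

lemma tower_property:
  assumes "sublinear_exp E" "G_BM G E" "t \<ge> 0" "X \<in> bLip_cyl {0..}"
  shows "E (cexp E t X) = E X"
  using assms(4) tower_property_card[OF assms(1-3)] by (metis bLip_cyl_imp_lip_on_times)

section \<open>Continuity and measurability on the path space\<close>

lemma bdd_above_path_diff:
  assumes "w \<in> Omega" "w' \<in> Omega"
  shows "bdd_above ((\<lambda>t. norm (w t - w' t)) ` {0..x})"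
proof -
  have "continuous_on UNIV w" "continuous_on UNIV w'" using assms unfolding Omega_def by auto
  then have "continuous_on {0..x} (\<lambda>t. norm (w t - w' t))"
    by (intro continuous_intros) (auto intro: continuous_on_subset)
  then have "compact ((\<lambda>t. norm (w t - w' t)) ` {0..x})"
    by (intro compact_continuous_image) auto
  then show ?thesis by (intro bounded_imp_bdd_above compact_imp_bounded)
qed

lemma path_dist_ge_pointwise:
  assumes "w \<in> Omega" "w' \<in> Omega" "s \<in> {0..real (Suc k)}"
  shows "(1/2) ^ Suc k * min 1 (norm (w s - w' s)) \<le> path_dist w w'"
proof -
  define f where "f = (\<lambda>k. (1/2::real) ^ Suc k * min 1 (SUP t\<in>{0..real (Suc k)}. norm (w t - w' t)))"
  have sup_ge: "norm (w u - w' u) \<le> (SUP t\<in>{0..real (Suc j)}. norm (w t - w' t))" if "u \<in> {0..real (Suc j)}" for u j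
    by (rule cSUP_upper[OF that bdd_above_path_diff[OF assms(1,2)]])
  have f0: "0 \<le> f j" for j
  proof -
    have "0 \<le> (SUP t\<in>{0..real (Suc j)}. norm (w t - w' t))"
      using sup_ge[of 0 j] by (smt (verit) norm_ge_zero atLeastAtMost_iff of_nat_0_le_iff)
    then show ?thesis unfolding f_def by simp
  qed
  have fle: "f j \<le> (1/2) ^ Suc j" for j unfolding f_def by (simp add: mult_left_le)
  have summ: "summable f"
    by (rule summable_comparison_test'[where g="\<lambda>j. (1/2::real) ^ Suc j"]) (use f0 fle in auto)
  have "f k \<le> suminf f" using sum_le_suminf[OF summ, of "{k}"] f0 by simp
  moreover have "(1/2) ^ Suc k * min 1 (norm (w s - w' s)) \<le> f k"
    unfolding f_def using sup_ge[OF assms(3)] by (intro mult_left_mono) auto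
  moreover have "path_dist w w' = suminf f" by (simp only: path_dist_def f_def)
  ultimately show ?thesis by linarith
qed

lemma path_eval_continuous:
  assumes w: "w \<in> Omega" and s: "s \<ge> 0" and e: "e > 0"
  shows "\<exists>d>0. \<forall>w'\<in>Omega. path_dist w w' < d \<longrightarrow> norm (w' s - w s) < e"
proof -
  define k where "k = nat \<lceil>s\<rceil>"
  have sk: "s \<in> {0..real (Suc k)}" unfolding k_def using s by (simp; linarith)
  define d where "d = (1/2::real) ^ Suc k * min e 1"
  have "d > 0" unfolding d_def using e by simp
  moreover have "norm (w' s - w s) < e" if w': "w' \<in> Omega" "path_dist w w' < d" for w'
  proof (rule ccontr)
    assume "\<not> norm (w' s - w s) < e"
    then have "min e 1 \<le> min 1 (norm (w s - w' s))" by (simp add: norm_minus_commute)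
    then have "d \<le> (1/2) ^ Suc k * min 1 (norm (w s - w' s))" unfolding d_def by (intro mult_left_mono) auto
    also have "\<dots> \<le> path_dist w w'" by (rule path_dist_ge_pointwise[OF w w'(1) sk])
    finally show False using w'(2) by simp
  qed
  ultimately show ?thesis by blast
qed

lemma finite_common_delta:
  fixes P :: "'a \<Rightarrow> real \<Rightarrow> bool"
  assumes "finite T" "\<forall>s\<in>T. \<exists>d>0. \<forall>w'. P w' d \<longrightarrow> Q s w'"
    and mono: "\<And>w' d d'. P w' d \<Longrightarrow> d \<le> d' \<Longrightarrow> P w' d'"
  shows "\<exists>d>0. \<forall>w'. P w' d \<longrightarrow> (\<forall>s\<in>T. Q s w')"
proof (cases "T = {}")
  case True then show ?thesis by (intro exI[of _ "1::real"]) auto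
next
  case False
  from assms(2) obtain D where D: "\<forall>s\<in>T. D s > 0 \<and> (\<forall>w'. P w' (D s) \<longrightarrow> Q s w')" by metis
  define d where "d = Min (D ` T)"
  have "d > 0" unfolding d_def using D assms(1) False by auto
  moreover have "d \<le> D s" if "s \<in> T" for s unfolding d_def using assms(1) that by auto
  ultimately show ?thesis using D mono by blast
qed

lemma lip_on_times_continuous:
  assumes X: "lip_on_times T X" and T: "T \<subseteq> {0..}" and w: "w \<in> Omega" and e: "e > 0"
  shows "\<exists>d>0. \<forall>w'\<in>Omega. path_dist w w' < d \<longrightarrow> \<bar>X w' - X w\<bar> < e"
proof -
  obtain L where L: "L \<ge> 0" "\<forall>w w'. \<bar>X w - X w'\<bar> \<le> L * (\<Sum>s\<in>T. norm (w s - w' s))"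
    using X unfolding lip_on_times_def by blast
  have fin: "finite T" using X by (rule lip_on_times_finite)
  define e' where "e' = e / (L * real (card T) + 1)"
  have e'0: "e' > 0" unfolding e'_def using e L by (simp add: add_nonneg_pos)
  have "\<forall>s\<in>T. \<exists>d>0. \<forall>w'. (w' \<in> Omega \<and> path_dist w w' < d) \<longrightarrow> norm (w' s - w s) < e'"
    using path_eval_continuous[OF w _ e'0] T by blast
  from finite_common_delta[OF fin this] obtain d where d: "d > 0"
    "\<forall>w'. (w' \<in> Omega \<and> path_dist w w' < d) \<longrightarrow> (\<forall>s\<in>T. norm (w' s - w s) < e')" by force
  have "\<bar>X w' - X w\<bar> < e" if "w' \<in> Omega" "path_dist w w' < d" for w'
  proof -
    have "(\<Sum>s\<in>T. norm (w' s - w s)) \<le> real (card T) * e'"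
      using d that by (intro sum_bounded_above) (auto intro: less_imp_le)
    then have "\<bar>X w' - X w\<bar> \<le> L * (real (card T) * e')"
      using L by (meson mult_left_mono order_trans)
    also have "\<dots> < e"
    proof -
      have "L * (real (card T) * e') = e * (L * real (card T)) / (L * real (card T) + 1)"
        unfolding e'_def by (simp add: field_simps)
      also have "\<dots> < e" using e L by (simp add: pos_divide_less_eq add_nonneg_pos)
      finally show ?thesis .
    qed
    finally show ?thesis .
  qed
  then show ?thesis using d by blast
qed

lemma bLip_cyl_bcont:
  assumes "X \<in> bLip_cyl {0..}" shows "bcont X"
proof -
  obtain T where T: "T \<subseteq> {0..}" "lip_on_times T X" using assms by (rule bLip_cyl_imp_lip_on_times)
  then obtain M where "\<forall>w. \<bar>X w\<bar> \<le> M" unfolding lip_on_times_def by blast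
  then show ?thesis unfolding bcont_def using lip_on_times_continuous[OF T(2,1)] by blast
qed

lemma space_Omega_borel: "space Omega_borel = Omega"
  unfolding Omega_borel_def by (rule space_measure_of) (auto simp: Omega_open_def)

lemma sets_Omega_borel: "sets Omega_borel = sigma_sets Omega (Collect Omega_open)"
  unfolding Omega_borel_def by (rule sets_measure_of) (auto simp: Omega_open_def)

lemma Omega_open_sets: "Omega_open U \<Longrightarrow> U \<in> sets Omega_borel"
  unfolding sets_Omega_borel by auto

lemma bcont_measurable:
  assumes "bcont f"
  shows "f \<in> borel_measurable Omega_borel"
proof (rule borel_measurableI)
  fix S :: "real set" assume S: "open S"
  have "Omega_open (f -` S \<inter> Omega)" unfolding Omega_open_def
  proof (intro conjI ballI)
    fix w assume w: "w \<in> f -` S \<inter> Omega"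
    then obtain e where e: "e > 0" "ball (f w) e \<subseteq> S" using S open_contains_ball by blast
    obtain d where d: "d > 0" "\<forall>w'\<in>Omega. path_dist w w' < d \<longrightarrow> \<bar>f w' - f w\<bar> < e"
      using assms w e unfolding bcont_def by blast
    have "w' \<in> f -` S \<inter> Omega" if "w' \<in> Omega" "path_dist w w' < d" for w'
    proof -
      have "f w' \<in> ball (f w) e" using d that by (simp add: dist_real_def abs_minus_commute)
      then show ?thesis using e that by auto
    qed
    then show "\<exists>e>0. \<forall>w'\<in>Omega. path_dist w w' < e \<longrightarrow> w' \<in> f -` S \<inter> Omega" using d by blast
  qed auto
  then show "f -` S \<inter> space Omega_borel \<in> sets Omega_borel"
    unfolding space_Omega_borel by (rule Omega_open_sets)
qed

lemma bLip_cyl_measurable: "X \<in> bLip_cyl {0..} \<Longrightarrow> X \<in> borel_measurable Omega_borel"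
  by (intro bcont_measurable bLip_cyl_bcont)

section \<open>Representation by the family PP\<close>

lemma G_settingD:
  assumes "G_setting G E PP"
  shows "sublinear_exp E" "G_BM G E" "prob_family PP" "weakly_compact PP"
    "\<And>X. X \<in> bLip_cyl {0..} \<Longrightarrow> E X = (SUP P\<in>PP. \<integral>w. X w \<partial>P)"
  using assms unfolding G_setting_def by auto

lemma prob_familyD:
  assumes "prob_family PP" "P \<in> PP"
  shows "prob_space P" "sets P = sets Omega_borel" "space P = Omega"
  using assms unfolding prob_family_def by auto

lemma measurable_prob_family:
  fixes f :: "('d::finite) path \<Rightarrow> real"
  assumes "prob_family PP" "P \<in> PP" "f \<in> borel_measurable Omega_borel"
  shows "f \<in> borel_measurable P"
proof -
  have "f \<in> borel_measurable P \<longleftrightarrow> f \<in> borel_measurable Omega_borel"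
    by (rule arg_cong[where f="\<lambda>S. f \<in> S"], rule measurable_cong_sets) (auto simp: prob_familyD(2)[OF assms(1,2)])
  then show ?thesis using assms(3) by simp
qed

lemma bLip_cyl_integrable:
  assumes "prob_family PP" "P \<in> PP" "f \<in> bLip_cyl {0..}"
  shows "integrable P f"
proof -
  obtain M where M: "\<forall>w. \<bar>f w\<bar> \<le> M" using assms(3) by (rule bLip_cyl_bounded)
  interpret prob_space P using prob_familyD[OF assms(1,2)] by simp
  show ?thesis
    by (rule integrable_const_bound[where B=M]) (use M measurable_prob_family[OF assms(1,2) bLip_cyl_measurable[OF assms(3)]] in auto)
qed

lemma nn_integral_bLip_cyl:
  assumes PP: "prob_family PP" and Q: "Q \<in> PP" and C: "C \<in> bLip_cyl {0..}" "\<forall>w. C w \<ge> 0"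
  shows "(\<integral>\<^sup>+w. ennreal (C w) \<partial>Q) = ennreal (\<integral>w. C w \<partial>Q)"
  by (rule nn_integral_eq_integral[OF bLip_cyl_integrable[OF PP Q C(1)]]) (use C(2) in auto)

lemma bLip_cyl_abs_integral_le:
  assumes "prob_family PP" "P \<in> PP" "f \<in> bLip_cyl {0..}" "\<forall>w. \<bar>f w\<bar> \<le> M"
  shows "\<bar>\<integral>w. f w \<partial>P\<bar> \<le> M"
proof -
  interpret prob_space P using prob_familyD[OF assms(1,2)] by simp
  have i: "integrable P f" by (rule bLip_cyl_integrable[OF assms(1-3)])
  have "\<bar>\<integral>w. f w \<partial>P\<bar> \<le> \<integral>w. \<bar>f w\<bar> \<partial>P" by (rule integral_abs_bound)
  also have "\<dots> \<le> \<integral>w. M \<partial>P" using assms(4) i by (intro integral_mono) auto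
  also have "\<dots> = M" by (simp add: prob_space)
  finally show ?thesis .
qed

lemma G_setting_nonempty:
  assumes "G_setting G E PP" shows "PP \<noteq> {}"
proof
  assume e: "PP = {}"
  have b: "(\<lambda>_. c) \<in> bLip_cyl {0..}" for c :: real by (rule bLip_cyl_const)
  have "E (\<lambda>_. 0) = E (\<lambda>_. 1)" using G_settingD(5)[OF assms b[of 0]] G_settingD(5)[OF assms b[of 1]] e by simp
  then show False using sublinear_exp_const[OF G_settingD(1)[OF assms]] by (metis zero_neq_one)
qed

lemma integral_le_sublinear_exp:
  assumes GS: "G_setting G E PP" and P: "P \<in> PP" and f: "f \<in> bLip_cyl {0..}"
  shows "(\<integral>w. f w \<partial>P) \<le> E f"
proof -
  obtain M where M: "\<forall>w. \<bar>f w\<bar> \<le> M" using f by (rule bLip_cyl_bounded)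
  have "bdd_above ((\<lambda>Q. \<integral>w. f w \<partial>Q) ` PP)"
    using bLip_cyl_abs_integral_le[OF G_settingD(3)[OF GS] _ f M] by (intro bdd_aboveI[of _ M]) (auto simp: abs_le_iff)
  then have "(\<integral>w. f w \<partial>P) \<le> (SUP Q\<in>PP. \<integral>w. f w \<partial>Q)" by (rule cSUP_upper[OF P])
  then show ?thesis using G_settingD(5)[OF GS f] by simp
qed

lemma ennreal_sublinear_exp_eq_upE:
  assumes GS: "G_setting G E PP" and f: "f \<in> bLip_cyl {0..}" "\<forall>w. f w \<ge> 0"
  shows "ennreal (E f) = upE PP (\<lambda>w. ennreal (f w))"
proof -
  have PP: "prob_family PP" by (rule G_settingD(3)[OF GS])
  obtain M where M: "\<forall>w. \<bar>f w\<bar> \<le> M" using f(1) by (rule bLip_cyl_bounded)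
  have "(SUP Q\<in>PP. ennreal (\<integral>w. f w \<partial>Q)) \<le> ennreal M"
    using bLip_cyl_abs_integral_le[OF PP _ f(1) M] by (intro SUP_least ennreal_leI) (auto simp: abs_le_iff)
  then have finite: "(SUP Q\<in>PP. ennreal (\<integral>w. f w \<partial>Q)) \<noteq> \<top>" by (metis ennreal_neq_top top.extremum_uniqueI)
  have "ennreal (E f) = ennreal (SUP Q\<in>PP. \<integral>w. f w \<partial>Q)" using G_settingD(5)[OF GS f(1)] by simp
  also have "\<dots> = (SUP Q\<in>PP. ennreal (\<integral>w. f w \<partial>Q))" by (rule ennreal_SUP[OF finite G_setting_nonempty[OF GS]])
  also have "\<dots> = upE PP (\<lambda>w. ennreal (f w))"
    unfolding upE_def using nn_integral_bLip_cyl[OF PP _ f] by (intro SUP_cong) auto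
  finally show ?thesis .
qed

lemma nn_integral_cexp_diff_le_upE:
  assumes GS: "G_setting G E PP" and t: "t \<ge> 0" and U: "U \<in> bLip_cyl {0..}" and V: "V \<in> bLip_cyl {0..}" and P: "P \<in> PP"
  shows "(\<integral>\<^sup>+w. ennreal (cexp E t U w - cexp E t V w) \<partial>P) \<le> upE PP (\<lambda>w. ennreal (U w - V w))"
proof -
  have E: "sublinear_exp E" and G: "G_BM G E" and PP: "prob_family PP" using G_settingD[OF GS] by auto
  define D where "D = (\<lambda>w. max (U w - V w) 0)"
  have D: "D \<in> bLip_cyl {0..}" unfolding D_def by (intro bLip_cyl_pos_part bLip_cyl_diff U V)
  have ED: "cexp E t D \<in> bLip_cyl {0..}" by (rule cexp_in_bLip_cyl[OF E D t])
  have le: "cexp E t U w \<le> cexp E t V w + cexp E t D w" for w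
  proof -
    have "cexp E t U w \<le> E (\<lambda>v. V (splice t w v) + D (splice t w v))" unfolding cexp_def
      by (intro sublinear_exp_mono[OF E] bLip_cyl_add splice_in_bLip_cyl U V D t) (auto simp: D_def)
    also have "\<dots> \<le> cexp E t V w + cexp E t D w" unfolding cexp_def
      by (intro sublinear_exp_add[OF E] splice_in_bLip_cyl V D t)
    finally show ?thesis .
  qed
  have D0: "cexp E t D w \<ge> 0" for w
  proof -
    have "E (\<lambda>_. 0) \<le> cexp E t D w" unfolding cexp_def
      by (intro sublinear_exp_mono[OF E] bLip_cyl_const splice_in_bLip_cyl D t) (auto simp: D_def)
    then show ?thesis using sublinear_exp_const[OF E] by simp
  qed
  have "(\<integral>\<^sup>+w. ennreal (cexp E t U w - cexp E t V w) \<partial>P) \<le> (\<integral>\<^sup>+w. ennreal (cexp E t D w) \<partial>P)"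
    using le by (intro nn_integral_mono ennreal_leI) (smt (verit))
  also have "\<dots> = ennreal (\<integral>w. cexp E t D w \<partial>P)"
    using D0 by (intro nn_integral_bLip_cyl[OF PP P ED]) auto
  also have "\<dots> \<le> ennreal (E (cexp E t D))" by (intro ennreal_leI integral_le_sublinear_exp[OF GS P ED])
  also have "E (cexp E t D) = E D" by (rule tower_property[OF E G t D])
  also have "ennreal (E D) = upE PP (\<lambda>w. ennreal (D w))"
    by (rule ennreal_sublinear_exp_eq_upE[OF GS D]) (auto simp: D_def)
  also have "(\<lambda>w. ennreal (D w)) = (\<lambda>w. ennreal (U w - V w))" unfolding D_def by (simp add: ennreal_max_0')
  finally show ?thesis .
qed

lemma cond_cyl_eq_cexp:
  fixes X Y :: "('d::finite) path \<Rightarrow> real"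
  assumes E: "sublinear_exp E" and t: "t \<ge> 0" and X: "X \<in> bLip_cyl {0..}" and cc: "cond_cyl E t X Y"
  shows "\<forall>w\<in>Omega. Y w = cexp E t X w"
proof
  fix w :: "'d path" assume w: "w \<in> Omega"
  obtain m k s r phi where c: "\<forall>i<m. s i \<in> {0..t}" "\<forall>j<k. t \<le> r j" "blip_fun (m + k) phi"
     "\<forall>w\<in>Omega. X w = phi (\<lambda>i. if i < m then w (s i) else if i < m + k then w (r (i - m)) - w t else 0)"
     "\<forall>w\<in>Omega. Y w = E (\<lambda>w'. phi (\<lambda>i. if i < m then w (s i)
                                       else if i < m + k then w' (r (i - m)) - w' t else 0))"
    using cc unfolding cond_cyl_def by blast
  define z where "z = (\<lambda>v i. if i < m then w (s i) else if i < m + k then v (r (i - m)) - v t else 0)"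
  define g where "g = (\<lambda>v. phi (z v))"
  define S where "S = r ` {..<k} \<union> {t}"
  have finS: "finite S" unfolding S_def by auto
  have z_lip: "norm (z a i - z b i) \<le> 2 * (\<Sum>u\<in>S. norm (a u - b u))" if "i < m + k" for a b i
  proof (cases "i < m")
    case True then show ?thesis unfolding z_def by (auto intro: sum_nonneg)
  next
    case False
    then have "r (i - m) \<in> S" "t \<in> S" using that unfolding S_def by auto
    then have "norm (a (r (i - m)) - b (r (i - m))) \<le> (\<Sum>u\<in>S. norm (a u - b u))"
      "norm (a t - b t) \<le> (\<Sum>u\<in>S. norm (a u - b u))"
      using finS by (auto intro!: member_le_sum)
    moreover have "z a i - z b i = (a (r (i - m)) - b (r (i - m))) - (a t - b t)"
      unfolding z_def using False that by auto
    ultimately show ?thesis by (smt (verit) norm_triangle_ineq4)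
  qed
  have "lip_on_times S g" unfolding g_def by (rule lip_on_times_comp_blip_fun[OF c(3) finS _ z_lip]) simp
  moreover have "S \<subseteq> {0..}" unfolding S_def using c(2) t by force
  ultimately have gE: "g \<in> bLip_cyl {0..}" by (rule lip_on_times_imp_bLip_cyl)
  have fE: "(\<lambda>v. X (splice t w v)) \<in> bLip_cyl {0..}" by (rule splice_in_bLip_cyl[OF X t])
  have "\<forall>v::'d path\<in>Omega. X (splice t w v) = g v"
  proof
    fix v :: "'d path" assume v: "v \<in> Omega"
    have cw: "splice t w v \<in> Omega" by (rule splice_in_Omega[OF t w v])
    have "(\<lambda>i. if i < m then splice t w v (s i) else if i < m + k then splice t w v (r (i - m)) - splice t w v t else 0)
       = z v"
    proof
      fix i
      have "s i \<le> t" if "i < m" using c(1) that by auto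
      moreover have "t \<le> r (i - m)" if "\<not> i < m" "i < m + k" using c(2) that by auto
      ultimately show "(if i < m then splice t w v (s i) else if i < m + k then splice t w v (r (i - m)) - splice t w v t else 0)
          = z v i" unfolding z_def splice_def by (auto simp: min_absorb1 min_absorb2 max_absorb1 max_absorb2)
    qed
    then show "X (splice t w v) = g v" using c(4) cw unfolding g_def by simp
  qed
  then have "E (\<lambda>v. X (splice t w v)) = E g" by (rule sublinear_exp_cong[OF E fE gE])
  then show "Y w = cexp E t X w" using c(5) w unfolding cexp_def g_def z_def by simp
qed

lemma ennreal_pos_diff_le:
  fixes x y x' y' :: real
  shows "ennreal (x - y) \<le> ennreal \<bar>x - x'\<bar> + ennreal (x' - y') + ennreal \<bar>y - y'\<bar>"
proof -
  have "ennreal (x - y) \<le> ennreal (\<bar>x - x'\<bar> + max (x' - y') 0 + \<bar>y - y'\<bar>)"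
    by (rule ennreal_leI) linarith
  also have "\<dots> = ennreal \<bar>x - x'\<bar> + ennreal (max (x' - y') 0) + ennreal \<bar>y - y'\<bar>"
    by (simp add: ennreal_plus)
  finally show ?thesis by (simp add: ennreal_max_0')
qed

lemma nn_integral_pos_diff_le:
  fixes x y x' y' :: "'a \<Rightarrow> real"
  assumes [measurable]: "x \<in> borel_measurable M" "x' \<in> borel_measurable M"
    "y \<in> borel_measurable M" "y' \<in> borel_measurable M"
  shows "(\<integral>\<^sup>+w. ennreal (x w - y w) \<partial>M) \<le>
    (\<integral>\<^sup>+w. ennreal \<bar>x w - x' w\<bar> \<partial>M) + (\<integral>\<^sup>+w. ennreal (x' w - y' w) \<partial>M) + (\<integral>\<^sup>+w. ennreal \<bar>y w - y' w\<bar> \<partial>M)"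
proof -
  have "(\<integral>\<^sup>+w. ennreal (x w - y w) \<partial>M) \<le>
      (\<integral>\<^sup>+w. ennreal \<bar>x w - x' w\<bar> + ennreal (x' w - y' w) + ennreal \<bar>y w - y' w\<bar> \<partial>M)"
    by (intro nn_integral_mono ennreal_pos_diff_le)
  also have "\<dots> = (\<integral>\<^sup>+w. ennreal \<bar>x w - x' w\<bar> + ennreal (x' w - y' w) \<partial>M)
      + (\<integral>\<^sup>+w. ennreal \<bar>y w - y' w\<bar> \<partial>M)"
    by (rule nn_integral_add) measurable
  also have "(\<integral>\<^sup>+w. ennreal \<bar>x w - x' w\<bar> + ennreal (x' w - y' w) \<partial>M)
      = (\<integral>\<^sup>+w. ennreal \<bar>x w - x' w\<bar> \<partial>M) + (\<integral>\<^sup>+w. ennreal (x' w - y' w) \<partial>M)"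
    by (rule nn_integral_add) measurable
  finally show ?thesis .
qed

lemma nn_integral_le_upE: "Q \<in> PP \<Longrightarrow> (\<integral>\<^sup>+w. f w \<partial>Q) \<le> upE PP f"
  unfolding upE_def by (rule SUP_upper)

lemma upE_pos_diff_le:
  fixes x y x' y' :: "('d::finite) path \<Rightarrow> real"
  assumes PP: "prob_family PP" and "x \<in> borel_measurable Omega_borel" "x' \<in> borel_measurable Omega_borel"
    "y \<in> borel_measurable Omega_borel" "y' \<in> borel_measurable Omega_borel"
  shows "upE PP (\<lambda>w. ennreal (x w - y w)) \<le>
    upE PP (\<lambda>w. ennreal \<bar>x w - x' w\<bar>) + upE PP (\<lambda>w. ennreal (x' w - y' w)) + upE PP (\<lambda>w. ennreal \<bar>y w - y' w\<bar>)"
  unfolding upE_def[of PP "\<lambda>w. ennreal (x w - y w)"]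
proof (rule SUP_least)
  fix Q assume Q: "Q \<in> PP"
  have "(\<integral>\<^sup>+w. ennreal (x w - y w) \<partial>Q) \<le>
    (\<integral>\<^sup>+w. ennreal \<bar>x w - x' w\<bar> \<partial>Q) + (\<integral>\<^sup>+w. ennreal (x' w - y' w) \<partial>Q) + (\<integral>\<^sup>+w. ennreal \<bar>y w - y' w\<bar> \<partial>Q)"
    using assms by (intro nn_integral_pos_diff_le measurable_prob_family[OF PP Q])
  also have "\<dots> \<le> upE PP (\<lambda>w. ennreal \<bar>x w - x' w\<bar>) + upE PP (\<lambda>w. ennreal (x' w - y' w))
      + upE PP (\<lambda>w. ennreal \<bar>y w - y' w\<bar>)"
    by (intro add_mono nn_integral_le_upE Q)
  finally show "(\<integral>\<^sup>+w. ennreal (x w - y w) \<partial>Q) \<le> \<dots>" .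
qed

lemma ennreal_le_of_le_add_tendsto_zero:
  fixes A B :: ennreal
  assumes "\<And>k. A \<le> B + e k" "e \<longlonglongrightarrow> 0"
  shows "A \<le> B"
proof -
  have "(\<lambda>k. B + e k) \<longlonglongrightarrow> B + 0" by (intro tendsto_add tendsto_const assms(2))
  then show ?thesis using assms(1) by (intro LIMSEQ_le_const[of "\<lambda>k. B + e k"]) auto
qed
lemma nn_integral_cond_exp_diff_le_upE:
  assumes GS: "G_setting G E PP" and t: "t \<ge> 0" and P: "P \<in> PP"
    and cU: "cond_exp E PP t U YU" and cV: "cond_exp E PP t V YV"
  shows "(\<integral>\<^sup>+w. ennreal (YU w - YV w) \<partial>P) \<le> upE PP (\<lambda>w. ennreal (U w - V w))"
proof -
  have E: "sublinear_exp E" and PP: "prob_family PP" using G_settingD[OF GS] by auto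
  obtain Uk YUk where Uk: "\<forall>k. Uk k \<in> bLip_cyl {0..} \<and> cond_cyl E t (Uk k) (YUk k)"
    "(\<lambda>k. upE PP (\<lambda>w. ennreal \<bar>Uk k w - U w\<bar>)) \<longlonglongrightarrow> 0"
    "(\<lambda>k. upE PP (\<lambda>w. ennreal \<bar>YUk k w - YU w\<bar>)) \<longlonglongrightarrow> 0"
    and mU: "U \<in> L1G PP {0..}" "YU \<in> borel_measurable Omega_borel"
    using cU unfolding cond_exp_def by blast
  obtain Vk YVk where Vk: "\<forall>k. Vk k \<in> bLip_cyl {0..} \<and> cond_cyl E t (Vk k) (YVk k)"
    "(\<lambda>k. upE PP (\<lambda>w. ennreal \<bar>Vk k w - V w\<bar>)) \<longlonglongrightarrow> 0"
    "(\<lambda>k. upE PP (\<lambda>w. ennreal \<bar>YVk k w - YV w\<bar>)) \<longlonglongrightarrow> 0"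
    and mV: "V \<in> L1G PP {0..}" "YV \<in> borel_measurable Omega_borel"
    using cV unfolding cond_exp_def by blast
  have Ub: "Uk k \<in> bLip_cyl {0..}" and Vb: "Vk k \<in> bLip_cyl {0..}"
    and Uc: "cond_cyl E t (Uk k) (YUk k)" and Vc: "cond_cyl E t (Vk k) (YVk k)" for k
    using Uk(1) Vk(1) by auto
  have mUV: "U \<in> borel_measurable Omega_borel" "V \<in> borel_measurable Omega_borel"
    using mU(1) mV(1) unfolding L1G_def by auto
  have mk: "Uk k \<in> borel_measurable Omega_borel" "Vk k \<in> borel_measurable Omega_borel"
    "cexp E t (Uk k) \<in> borel_measurable Omega_borel" "cexp E t (Vk k) \<in> borel_measurable Omega_borel" for k
    using Ub Vb by (simp_all add: bLip_cyl_measurable cexp_in_bLip_cyl[OF E _ t])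
  define e where "e = (\<lambda>k. upE PP (\<lambda>w. ennreal \<bar>YUk k w - YU w\<bar>) + upE PP (\<lambda>w. ennreal \<bar>YVk k w - YV w\<bar>)
      + (upE PP (\<lambda>w. ennreal \<bar>Uk k w - U w\<bar>) + upE PP (\<lambda>w. ennreal \<bar>Vk k w - V w\<bar>)))"
  have "e \<longlonglongrightarrow> 0 + 0 + (0 + 0)" unfolding e_def by (intro tendsto_add Uk(2,3) Vk(2,3))
  then have e: "e \<longlonglongrightarrow> 0" by simp
  have "(\<integral>\<^sup>+w. ennreal (YU w - YV w) \<partial>P) \<le> upE PP (\<lambda>w. ennreal (U w - V w)) + e k" for k
  proof -
    have "\<forall>w\<in>space P. YUk k w = cexp E t (Uk k) w" "\<forall>w\<in>space P. YVk k w = cexp E t (Vk k) w"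
      using cond_cyl_eq_cexp[OF E t Ub Uc] cond_cyl_eq_cexp[OF E t Vb Vc] prob_familyD(3)[OF PP P] by simp_all
    then have cong: "(\<integral>\<^sup>+w. ennreal \<bar>YU w - cexp E t (Uk k) w\<bar> \<partial>P) = (\<integral>\<^sup>+w. ennreal \<bar>YUk k w - YU w\<bar> \<partial>P)"
      "(\<integral>\<^sup>+w. ennreal \<bar>YV w - cexp E t (Vk k) w\<bar> \<partial>P) = (\<integral>\<^sup>+w. ennreal \<bar>YVk k w - YV w\<bar> \<partial>P)"
      by (simp_all add: abs_minus_commute cong: nn_integral_cong)
    have "(\<integral>\<^sup>+w. ennreal (YU w - YV w) \<partial>P) \<le> (\<integral>\<^sup>+w. ennreal \<bar>YU w - cexp E t (Uk k) w\<bar> \<partial>P)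
        + (\<integral>\<^sup>+w. ennreal (cexp E t (Uk k) w - cexp E t (Vk k) w) \<partial>P)
        + (\<integral>\<^sup>+w. ennreal \<bar>YV w - cexp E t (Vk k) w\<bar> \<partial>P)"
      using mU(2) mV(2) mk by (intro nn_integral_pos_diff_le measurable_prob_family[OF PP P])
    also have "\<dots> \<le> upE PP (\<lambda>w. ennreal \<bar>YUk k w - YU w\<bar>) + upE PP (\<lambda>w. ennreal (Uk k w - Vk k w))
        + upE PP (\<lambda>w. ennreal \<bar>YVk k w - YV w\<bar>)"
      unfolding cong
      by (intro add_mono nn_integral_le_upE P nn_integral_cexp_diff_le_upE[OF GS t Ub Vb P])
    also have "\<dots> \<le> upE PP (\<lambda>w. ennreal \<bar>YUk k w - YU w\<bar>) + (upE PP (\<lambda>w. ennreal \<bar>Uk k w - U w\<bar>)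
        + upE PP (\<lambda>w. ennreal (U w - V w)) + upE PP (\<lambda>w. ennreal \<bar>Vk k w - V w\<bar>))
        + upE PP (\<lambda>w. ennreal \<bar>YVk k w - YV w\<bar>)"
      using mUV mk by (intro add_mono upE_pos_diff_le[OF PP] order_refl)
    also have "\<dots> = upE PP (\<lambda>w. ennreal (U w - V w)) + e k" unfolding e_def by (simp add: ac_simps)
    finally show ?thesis .
  qed
  then show ?thesis using e by (rule ennreal_le_of_le_add_tendsto_zero)
qed

section \<open>A Dini-type theorem for the upper expectation\<close>

lemma ennreal_le_add_abs_diff: "ennreal a \<le> ennreal b + ennreal \<bar>b - a\<bar>"
proof -
  have "ennreal a \<le> ennreal (max b 0 + \<bar>b - a\<bar>)" by (rule ennreal_leI) linarith
  also have "\<dots> = ennreal (max b 0) + ennreal \<bar>b - a\<bar>" by (simp add: ennreal_plus)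
  finally show ?thesis by (simp add: ennreal_max_0')
qed

lemma nn_integral_le_approx:
  assumes PP: "prob_family PP" and Q: "Q \<in> PP"
    and f: "f \<in> borel_measurable Omega_borel" and g: "g \<in> borel_measurable Omega_borel"
  shows "(\<integral>\<^sup>+w. ennreal (f w) \<partial>Q) \<le> (\<integral>\<^sup>+w. ennreal (g w) \<partial>Q) + upE PP (\<lambda>w. ennreal \<bar>g w - f w\<bar>)"
proof -
  note [measurable] = measurable_prob_family[OF PP Q f] measurable_prob_family[OF PP Q g]
  have "(\<integral>\<^sup>+w. ennreal (f w) \<partial>Q) \<le> (\<integral>\<^sup>+w. ennreal (g w) + ennreal \<bar>g w - f w\<bar> \<partial>Q)"
    by (intro nn_integral_mono ennreal_le_add_abs_diff)
  also have "\<dots> = (\<integral>\<^sup>+w. ennreal (g w) \<partial>Q) + (\<integral>\<^sup>+w. ennreal \<bar>g w - f w\<bar> \<partial>Q)"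
    by (rule nn_integral_add) measurable
  also have "\<dots> \<le> (\<integral>\<^sup>+w. ennreal (g w) \<partial>Q) + upE PP (\<lambda>w. ennreal \<bar>g w - f w\<bar>)"
    by (intro add_mono order_refl nn_integral_le_upE Q)
  finally show ?thesis .
qed

lemma nn_integral_lt_top_if_approx:
  assumes PP: "prob_family PP" and Q: "Q \<in> PP" and Z: "Z \<in> borel_measurable Omega_borel"
    and C: "C \<in> bLip_cyl {0..}" "\<forall>w. C w \<ge> 0" "upE PP (\<lambda>w. ennreal \<bar>C w - Z w\<bar>) < \<infinity>"
  shows "(\<integral>\<^sup>+w. ennreal (Z w) \<partial>Q) < \<infinity>"
proof -
  have "(\<integral>\<^sup>+w. ennreal (Z w) \<partial>Q) \<le> ennreal (\<integral>w. C w \<partial>Q) + upE PP (\<lambda>w. ennreal \<bar>C w - Z w\<bar>)"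
    using nn_integral_le_approx[OF PP Q Z bLip_cyl_measurable[OF C(1)]] nn_integral_bLip_cyl[OF PP Q C(1,2)]
    by simp
  also have "\<dots> < \<infinity>" using C(3) by (simp add: less_top[symmetric])
  finally show ?thesis .
qed

text \<open>Weak compactness enters here: a lower bound on the integrals of Z along a sequence of
  measures survives in a weak limit, because Z is approximable by bounded continuous functionals
  uniformly over PP.\<close>

lemma weak_limit_nn_integral_lower_bound:
  fixes Z :: "nat \<Rightarrow> ('d::finite) path \<Rightarrow> real"
  assumes PP: "prob_family PP" and Pn: "\<And>n. Pn n \<in> PP" and Pl: "Pl \<in> PP"
    and r: "strict_mono r" and conv: "weak_conv (Pn \<circ> r) Pl"
    and mZ: "\<And>n. Z n \<in> borel_measurable Omega_borel" and Z0: "\<And>n w. Z n w \<ge> 0"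
    and antimono: "\<And>P n n'. P \<in> PP \<Longrightarrow> n \<le> n' \<Longrightarrow> (\<integral>\<^sup>+w. ennreal (Z n' w) \<partial>P) \<le> (\<integral>\<^sup>+w. ennreal (Z n w) \<partial>P)"
    and approx: "\<And>n \<delta>. \<delta> > 0 \<Longrightarrow> \<exists>C. C \<in> bLip_cyl {0..} \<and> (\<forall>w. C w \<ge> 0) \<and> upE PP (\<lambda>w. ennreal \<bar>C w - Z n w\<bar>) < ennreal \<delta>"
    and lower: "\<And>n. ennreal \<epsilon> < (\<integral>\<^sup>+w. ennreal (Z n w) \<partial>Pn n)"
  shows "ennreal \<epsilon> \<le> (\<integral>\<^sup>+w. ennreal (Z m w) \<partial>Pl)"
proof (rule ennreal_le_epsilon)
  fix e :: real assume e: "0 < e"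
  obtain C where C: "C \<in> bLip_cyl {0..}" "\<forall>w. C w \<ge> 0" and
    close: "upE PP (\<lambda>w. ennreal \<bar>C w - Z m w\<bar>) < ennreal (e / 2)"
    using approx[of "e / 2" m] e by auto
  have mC: "C \<in> borel_measurable Omega_borel" by (rule bLip_cyl_measurable[OF C(1)])
  have "ennreal \<epsilon> \<le> ennreal ((\<integral>w. C w \<partial>Pn (r n)) + e / 2)" if "n \<ge> m" for n
  proof -
    have "m \<le> r n" using seq_suble[OF r, of n] that by simp
    have "ennreal \<epsilon> \<le> (\<integral>\<^sup>+w. ennreal (Z (r n) w) \<partial>Pn (r n))" using lower less_imp_le by blast
    also have "\<dots> \<le> (\<integral>\<^sup>+w. ennreal (Z m w) \<partial>Pn (r n))" by (rule antimono[OF Pn \<open>m \<le> r n\<close>])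
    also have "\<dots> \<le> ennreal (\<integral>w. C w \<partial>Pn (r n)) + upE PP (\<lambda>w. ennreal \<bar>C w - Z m w\<bar>)"
      using nn_integral_le_approx[OF PP Pn mZ mC] nn_integral_bLip_cyl[OF PP Pn C] by simp
    also have "\<dots> \<le> ennreal (\<integral>w. C w \<partial>Pn (r n)) + ennreal (e / 2)" using close by (intro add_mono) auto
    also have "\<dots> = ennreal ((\<integral>w. C w \<partial>Pn (r n)) + e / 2)"
      using C(2) e by (subst ennreal_plus) (auto intro: integral_nonneg_AE)
    finally show ?thesis .
  qed
  moreover have "(\<lambda>n. \<integral>w. C w \<partial>((Pn \<circ> r) n)) \<longlonglongrightarrow> (\<integral>w. C w \<partial>Pl)"
    using conv bLip_cyl_bcont[OF C(1)] unfolding weak_conv_def by blast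
  then have "(\<lambda>n. ennreal ((\<integral>w. C w \<partial>Pn (r n)) + e / 2)) \<longlonglongrightarrow> ennreal ((\<integral>w. C w \<partial>Pl) + e / 2)"
    by (intro tendsto_ennrealI tendsto_add tendsto_const) (simp add: o_def)
  ultimately have "ennreal \<epsilon> \<le> ennreal ((\<integral>w. C w \<partial>Pl) + e / 2)"
    by (intro LIMSEQ_le_const[where X="\<lambda>n. ennreal ((\<integral>w. C w \<partial>Pn (r n)) + e / 2)"]) auto
  also have "\<dots> = ennreal (\<integral>w. C w \<partial>Pl) + ennreal (e / 2)"
    using C(2) e by (subst ennreal_plus) (auto intro: integral_nonneg_AE)
  also have "ennreal (\<integral>w. C w \<partial>Pl) \<le> (\<integral>\<^sup>+w. ennreal (Z m w) \<partial>Pl) + ennreal (e / 2)"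
  proof -
    have "ennreal (\<integral>w. C w \<partial>Pl) \<le> (\<integral>\<^sup>+w. ennreal (Z m w) \<partial>Pl) + upE PP (\<lambda>w. ennreal \<bar>Z m w - C w\<bar>)"
      using nn_integral_le_approx[OF PP Pl mC mZ] nn_integral_bLip_cyl[OF PP Pl C] by simp
    then show ?thesis using close by (simp add: abs_minus_commute order_trans[OF _ add_left_mono])
  qed
  finally show "ennreal \<epsilon> \<le> (\<integral>\<^sup>+w. ennreal (Z m w) \<partial>Pl) + ennreal e"
    using e by (simp add: add.assoc flip: ennreal_plus)
qed

lemma INF_nn_integral_eq_zero:
  fixes Z :: "nat \<Rightarrow> 'a \<Rightarrow> real"
  assumes mZ: "\<And>n. Z n \<in> borel_measurable M"
    and dec: "AE w in M. (\<forall>n. Z (Suc n) w \<le> Z n w) \<and> (\<lambda>n. Z n w) \<longlonglongrightarrow> 0"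
    and fin: "(\<integral>\<^sup>+w. ennreal (Z 0 w) \<partial>M) < \<infinity>"
  shows "(INF m. \<integral>\<^sup>+w. ennreal (Z m w) \<partial>M) = 0"
proof -
  have "(INF m. \<integral>\<^sup>+w. ennreal (Z m w) \<partial>M) = (\<integral>\<^sup>+w. (INF m. ennreal (Z m w)) \<partial>M)"
  proof (rule nn_integral_monotone_convergence_INF_AE'[symmetric])
    show "AE w in M. ennreal (Z (Suc i) w) \<le> ennreal (Z i w)" for i
      using dec by eventually_elim (simp add: ennreal_leI)
    show "(\<lambda>w. ennreal (Z i w)) \<in> borel_measurable M" for i using mZ by measurable
    show "(\<integral>\<^sup>+w. ennreal (Z 0 w) \<partial>M) < \<infinity>" by (rule fin)
  qed
  also have "\<dots> = (\<integral>\<^sup>+w. 0 \<partial>M)"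
  proof (rule nn_integral_cong_AE)
    show "AE w in M. (INF m. ennreal (Z m w)) = 0"
      using dec
    proof eventually_elim
      case (elim w)
      have "antimono (\<lambda>m. ennreal (Z m w))"
      proof (rule antimonoI)
        fix a b :: nat assume "a \<le> b"
        then show "ennreal (Z b w) \<le> ennreal (Z a w)"
          using lift_Suc_antimono_le[of "\<lambda>m. Z m w"] elim by (simp add: ennreal_leI)
      qed
      then have "(\<lambda>m. ennreal (Z m w)) \<longlonglongrightarrow> (INF m. ennreal (Z m w))" by (rule LIMSEQ_INF)
      moreover have "(\<lambda>m. ennreal (Z m w)) \<longlonglongrightarrow> ennreal 0" using elim by (intro tendsto_ennrealI) blast
      ultimately show ?case by (simp add: LIMSEQ_unique)
    qed
  qed
  finally show ?thesis by simp
qed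
lemma upE_tendsto_zero:
  fixes Z :: "nat \<Rightarrow> ('d::finite) path \<Rightarrow> real"
  assumes GS: "G_setting G E PP"
    and mZ: "\<And>n. Z n \<in> borel_measurable Omega_borel" and Z0: "\<And>n w. Z n w \<ge> 0"
    and approx: "\<And>n \<delta>. \<delta> > 0 \<Longrightarrow> \<exists>C. C \<in> bLip_cyl {0..} \<and> (\<forall>w. C w \<ge> 0) \<and> upE PP (\<lambda>w. ennreal \<bar>C w - Z n w\<bar>) < ennreal \<delta>"
    and dec: "\<And>P. P \<in> PP \<Longrightarrow> AE w in P. (\<forall>n. Z (Suc n) w \<le> Z n w) \<and> (\<lambda>n. Z n w) \<longlonglongrightarrow> 0"
  shows "(\<lambda>n. upE PP (\<lambda>w. ennreal (Z n w))) \<longlonglongrightarrow> 0"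
proof -
  have PP: "prob_family PP" and wc: "weakly_compact PP" using G_settingD[OF GS] by auto
  have antimono: "(\<integral>\<^sup>+w. ennreal (Z n' w) \<partial>P) \<le> (\<integral>\<^sup>+w. ennreal (Z n w) \<partial>P)"
    if "P \<in> PP" "n \<le> n'" for P n n'
  proof (rule nn_integral_mono_AE)
    show "AE w in P. ennreal (Z n' w) \<le> ennreal (Z n w)"
      using dec[OF that(1)]
    proof eventually_elim
      case (elim w)
      then show ?case using lift_Suc_antimono_le[of "\<lambda>n. Z n w", OF _ that(2)] by (simp add: ennreal_leI)
    qed
  qed
  define u where "u = (\<lambda>n. upE PP (\<lambda>w. ennreal (Z n w)))"
  have "antimono u"
  proof (rule antimonoI)
    fix n n' :: nat assume "n \<le> n'"
    then show "u n' \<le> u n"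
      unfolding u_def upE_def by (intro SUP_mono) (use antimono in blast)
  qed
  then have lim: "u \<longlonglongrightarrow> (INF n. u n)" by (rule LIMSEQ_INF)
  have key: "(INF n. u n) \<le> ennreal \<epsilon>" if eps: "\<epsilon> > 0" for \<epsilon>
  proof (rule ccontr)
    assume "\<not> (INF n. u n) \<le> ennreal \<epsilon>"
    then have "ennreal \<epsilon> < u n" for n by (meson INF_lower UNIV_I not_le order_less_le_trans)
    then have "\<forall>n. \<exists>P\<in>PP. ennreal \<epsilon> < (\<integral>\<^sup>+w. ennreal (Z n w) \<partial>P)"
      unfolding u_def upE_def by (auto simp: less_SUP_iff)
    then obtain Pn where Pn: "\<And>n. Pn n \<in> PP" "\<And>n. ennreal \<epsilon> < (\<integral>\<^sup>+w. ennreal (Z n w) \<partial>Pn n)"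
      by metis
    obtain r Pl where r: "strict_mono r" "Pl \<in> PP" "weak_conv (Pn \<circ> r) Pl"
      using wc Pn(1) unfolding weakly_compact_def by blast
    have "ennreal \<epsilon> \<le> (\<integral>\<^sup>+w. ennreal (Z m w) \<partial>Pl)" for m
      by (rule weak_limit_nn_integral_lower_bound[OF PP Pn(1) r(2,1,3) mZ Z0 antimono approx Pn(2)])
    then have "ennreal \<epsilon> \<le> (INF m. \<integral>\<^sup>+w. ennreal (Z m w) \<partial>Pl)" by (rule INF_greatest)
    moreover have "(\<integral>\<^sup>+w. ennreal (Z 0 w) \<partial>Pl) < \<infinity>"
    proof -
      obtain C where C: "C \<in> bLip_cyl {0..}" "\<forall>w. C w \<ge> 0" "upE PP (\<lambda>w. ennreal \<bar>C w - Z 0 w\<bar>) < 1"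
        using approx[of 1 0] by auto
      have "upE PP (\<lambda>w. ennreal \<bar>C w - Z 0 w\<bar>) < \<infinity>" using C(3) by (rule order.strict_trans) simp
      then show ?thesis by (rule nn_integral_lt_top_if_approx[OF PP r(2) mZ C(1,2)])
    qed
    then have "(INF m. \<integral>\<^sup>+w. ennreal (Z m w) \<partial>Pl) = 0"
      by (intro INF_nn_integral_eq_zero dec[OF r(2)] measurable_prob_family[OF PP r(2) mZ])
    ultimately show False using eps by simp
  qed
  have "(INF n. u n) \<le> 0"
    by (rule ennreal_le_epsilon) (unfold add_0_left, rule key)
  then have "(INF n. u n) = 0" by (simp only: le_zero_eq)
  with lim show ?thesis unfolding u_def by (simp only:)
qed

section \<open>Quasi-sure statements\<close>

lemma cap_zero_imp_emeasure_zero: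
  assumes PP: "prob_family PP" and P: "P \<in> PP" and A: "A \<in> sets Omega_borel" and c: "cap PP A = 0"
  shows "emeasure P A = 0"
proof -
  have ps: "prob_space P" and sP: "sets P = sets Omega_borel" using prob_familyD[OF PP P] by auto
  have "bdd_above ((\<lambda>Q. measure Q A) ` PP)"
    using prob_familyD(1)[OF PP] by (intro bdd_aboveI[of _ 1]) (auto intro: prob_space.prob_le_1)
  then have "measure P A \<le> cap PP A" unfolding cap_def by (rule cSUP_upper[OF P])
  then have "measure P A = 0" using c by (simp add: measure_nonneg order.antisym)
  moreover have "emeasure P A = ennreal (measure P A)"
  proof -
    interpret prob_space P by (rule ps)
    show ?thesis by (rule emeasure_eq_measure)
  qed
  ultimately show ?thesis by simp
qed

lemma qs_imp_AE:
  assumes PP: "prob_family PP" and q: "qs PP Q" and P: "P \<in> PP"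
  shows "AE w in P. Q w"
proof -
  obtain A where A: "A \<in> sets Omega_borel" "cap PP A = 0" "\<forall>w\<in>Omega - A. Q w" using q unfolding qs_def by blast
  have "A \<in> null_sets P" using cap_zero_imp_emeasure_zero[OF PP P A(1,2)] A(1) prob_familyD(2)[OF PP P] by (simp add: null_sets_def)
  moreover have "{w \<in> space P. \<not> Q w} \<subseteq> A" using A(3) prob_familyD(3)[OF PP P] by auto
  ultimately show ?thesis by (rule AE_I')
qed

lemma qsI:
  assumes PP: "prob_family PP" and ne: "PP \<noteq> {}" and A: "A \<in> sets Omega_borel"
    and z: "\<And>P. P \<in> PP \<Longrightarrow> emeasure P A = 0" and Q: "\<forall>w\<in>Omega - A. Q w"
  shows "qs PP Q"
proof -
  have "cap PP A = (SUP P\<in>PP. (0::real))" unfolding cap_def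
    by (rule SUP_cong[OF refl]) (simp add: measure_def z)
  also have "\<dots> = 0" by (rule cSUP_const[OF ne])
  finally show ?thesis unfolding qs_def using A Q by blast
qed

lemma qs_if_AE:
  assumes PP: "prob_family PP" and ne: "PP \<noteq> {}" and A: "{w\<in>Omega. \<not> Q w} \<in> sets Omega_borel"
    and ae: "\<And>P. P \<in> PP \<Longrightarrow> AE w in P. Q w"
  shows "qs PP Q"
proof (rule qsI[OF PP ne A])
  fix P assume P: "P \<in> PP"
  have "(AE w in P. Q w) \<longleftrightarrow> emeasure P {w\<in>Omega. \<not> Q w} = 0"
    by (rule AE_iff_measurable) (use A prob_familyD[OF PP P] in auto)
  then show "emeasure P {w\<in>Omega. \<not> Q w} = 0" using ae[OF P] by simp
qed auto

lemma qs_mono: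
  assumes "qs PP Q" "\<forall>w\<in>Omega. Q w \<longrightarrow> R w" shows "qs PP R"
  using assms unfolding qs_def by blast

lemma qs_all:
  assumes PP: "prob_family PP" and ne: "PP \<noteq> {}" and q: "\<And>i::nat. qs PP (Q i)"
  shows "qs PP (\<lambda>w. \<forall>i. Q i w)"
proof -
  have "\<forall>i. \<exists>A. A \<in> sets Omega_borel \<and> cap PP A = 0 \<and> (\<forall>w\<in>Omega - A. Q i w)" using q unfolding qs_def by blast
  then obtain A where A: "\<And>i. A i \<in> sets Omega_borel" "\<And>i. cap PP (A i) = 0" "\<And>i. \<forall>w\<in>Omega - A i. Q i w" by metis
  show ?thesis
  proof (rule qsI[OF PP ne, of "\<Union>i. A i"])
    show "(\<Union>i. A i) \<in> sets Omega_borel" using A by auto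
    fix P assume P: "P \<in> PP"
    have "A i \<in> null_sets P" for i
      using cap_zero_imp_emeasure_zero[OF PP P A(1,2)] A(1) prob_familyD(2)[OF PP P] by (auto simp: null_sets_def)
    then have "(\<Union>i. A i) \<in> null_sets P" by (rule null_sets_UN)
    then show "emeasure P (\<Union>i. A i) = 0" by auto
  qed (use A in auto)
qed

lemma qs_conj:
  assumes PP: "prob_family PP" and ne: "PP \<noteq> {}" and "qs PP Q1" "qs PP Q2"
  shows "qs PP (\<lambda>w. Q1 w \<and> Q2 w)"
proof -
  have "qs PP (\<lambda>w. \<forall>i::nat. if i = 0 then Q1 w else Q2 w)"
  proof (rule qs_all[OF PP ne])
    show "qs PP (\<lambda>w. if i = 0 then Q1 w else Q2 w)" for i
      using assms(3,4) by (cases "i = 0") simp_all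
  qed
  then show ?thesis by (rule qs_mono) (metis nat.distinct(1))
qed

lemma ereal_le_if_le_add_inverse:
  assumes "\<forall>j::nat. x \<le> ereal (c + 1 / real (Suc j))"
  shows "x \<le> ereal c"
proof (rule ccontr)
  assume "\<not> x \<le> ereal c"
  then have lt: "ereal c < x" by simp
  show False
  proof (cases x)
    case (real r)
    then have "r - c > 0" using lt by simp
    then obtain j where "inverse (real (Suc j)) < r - c" using reals_Archimedean by blast
    moreover have "r \<le> c + 1 / real (Suc j)" using assms real by auto
    ultimately show False by (simp add: field_simps)
  next
    case PInf then show False using assms by auto
  next
    case MInf then show False using lt by simp
  qed
qed

lemma INF_ereal_le_INF_if_interlaced:
  fixes y z :: "nat \<Rightarrow> real"
  assumes "\<forall>m j. \<exists>n. y n \<le> z m + 1 / real (Suc j)"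
  shows "(INF n. ereal (y n)) \<le> (INF n. ereal (z n))"
proof (rule INF_greatest, rule ereal_le_if_le_add_inverse, rule allI)
  fix m j
  obtain n where "y n \<le> z m + 1 / real (Suc j)" using assms by blast
  then show "(INF n. ereal (y n)) \<le> ereal (z m + 1 / real (Suc j))"
    by (meson INF_lower UNIV_I ereal_less_eq(3) order_trans)
qed

lemma decreasing_interlaced_same_limit:
  fixes y z :: "nat \<Rightarrow> real"
  assumes "\<forall>n. y (Suc n) \<le> y n" and "\<forall>n. z (Suc n) \<le> z n"
    and "\<forall>m j. \<exists>n. y n \<le> z m + 1 / real (Suc j)"
    and "\<forall>m j. \<exists>n. z n \<le> y m + 1 / real (Suc j)"
  shows "\<exists>L. (\<lambda>n. ereal (y n)) \<longlonglongrightarrow> L \<and> (\<lambda>n. ereal (z n)) \<longlonglongrightarrow> L"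
proof -
  have "decseq (\<lambda>n. ereal (y n))" "decseq (\<lambda>n. ereal (z n))"
    using assms(1,2) by (simp_all add: decseq_Suc_iff)
  then have "(\<lambda>n. ereal (y n)) \<longlonglongrightarrow> (INF n. ereal (y n))" "(\<lambda>n. ereal (z n)) \<longlonglongrightarrow> (INF n. ereal (z n))"
    by (simp_all add: LIMSEQ_INF)
  moreover have "(INF n. ereal (y n)) = (INF n. ereal (z n))"
    using assms(3,4) by (intro order_antisym INF_ereal_le_INF_if_interlaced)
  ultimately show ?thesis by auto
qed

lemma pos_part_diff_tendsto_zero:
  fixes a b :: "nat \<Rightarrow> real"
  assumes da: "\<forall>n. a (Suc n) \<le> a n" and la: "(\<lambda>n. ereal (a n)) \<longlonglongrightarrow> L"
    and db: "\<forall>n. b (Suc n) \<le> b n" and lb: "(\<lambda>n. ereal (b n)) \<longlonglongrightarrow> L"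
  shows "(\<forall>n. max (a (Suc n) - b m) 0 \<le> max (a n - b m) 0) \<and> (\<lambda>n. max (a n - b m) 0) \<longlonglongrightarrow> 0"
proof
  show "\<forall>n. max (a (Suc n) - b m) 0 \<le> max (a n - b m) 0"
  proof
    fix n show "max (a (Suc n) - b m) 0 \<le> max (a n - b m) 0" using da[rule_format, of n] by (auto simp: max_def)
  qed
  have "L \<le> ereal (b m)"
  proof (rule LIMSEQ_le_const2[OF lb], intro exI allI impI)
    fix n assume "m \<le> n"
    then show "ereal (b n) \<le> ereal (b m)" using lift_Suc_antimono_le[of b, OF _ \<open>m \<le> n\<close>] db by simp
  qed
  show "(\<lambda>n. max (a n - b m) 0) \<longlonglongrightarrow> 0"
  proof (rule order_tendstoI)
    fix e :: real assume "e < 0"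
    then show "\<forall>\<^sub>F n in sequentially. e < max (a n - b m) 0" by (intro always_eventually allI) auto
  next
    fix e :: real assume e: "0 < e"
    have "L < ereal (b m + e)" 
    proof -
      have "ereal (b m) < ereal (b m + e)" using e by simp
      then show ?thesis using \<open>L \<le> ereal (b m)\<close> by (rule order.strict_trans1[rotated])
    qed
    then have "\<forall>\<^sub>F n in sequentially. ereal (a n) < ereal (b m + e)" by (rule order_tendstoD(2)[OF la])
    then show "\<forall>\<^sub>F n in sequentially. max (a n - b m) 0 < e"
      by eventually_elim (use e in auto)
  qed
qed

lemma cond_exp_measurable: "cond_exp E PP t X Y \<Longrightarrow> Y \<in> borel_measurable Omega_borel"
  unfolding cond_exp_def by blast

lemma L1G_measurable: "X \<in> L1G PP T \<Longrightarrow> X \<in> borel_measurable Omega_borel"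
  unfolding L1G_def by blast

lemma cond_exp_decreasing_qs:
  assumes GS: "G_setting G E PP" and t: "t \<ge> 0"
    and ce: "\<And>n. cond_exp E PP t (A n) (YA n)" and dec: "qs PP (\<lambda>w. \<forall>n. A (Suc n) w \<le> A n w)"
  shows "qs PP (\<lambda>w. \<forall>n. YA (Suc n) w \<le> YA n w)"
proof -
  have PP: "prob_family PP" and ne: "PP \<noteq> {}" using G_settingD[OF GS] G_setting_nonempty[OF GS] by auto
  have mY: "YA n \<in> borel_measurable Omega_borel" for n by (rule cond_exp_measurable[OF ce])
  have up0: "upE PP (\<lambda>w. ennreal (A (Suc n) w - A n w)) = 0" for n
  proof -
    have "(\<integral>\<^sup>+w. ennreal (A (Suc n) w - A n w) \<partial>Q) = (\<integral>\<^sup>+w. 0 \<partial>Q)" if Q: "Q \<in> PP" for Q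
      using qs_imp_AE[OF PP dec Q] by (intro nn_integral_cong_AE) (auto elim!: AE_mp simp: ennreal_eq_0_iff)
    then show ?thesis unfolding upE_def using ne by simp
  qed
  show ?thesis
  proof (rule qs_all[OF PP ne], rule qs_if_AE[OF PP ne])
    fix n
    have "{w \<in> space Omega_borel. YA n w < YA (Suc n) w} \<in> sets Omega_borel"
      by (rule borel_measurable_less[OF mY mY])
    then show "{w \<in> Omega. \<not> YA (Suc n) w \<le> YA n w} \<in> sets Omega_borel"
      by (simp add: not_le space_Omega_borel)
    fix P assume P: "P \<in> PP"
    note [measurable] = measurable_prob_family[OF PP P mY]
    have "(\<integral>\<^sup>+w. ennreal (YA (Suc n) w - YA n w) \<partial>P) = 0"
      using nn_integral_cond_exp_diff_le_upE[OF GS t P ce[of "Suc n"] ce[of n]] up0[of n] by simp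
    then have "AE w in P. ennreal (YA (Suc n) w - YA n w) = 0"
      by (subst nn_integral_0_iff_AE[symmetric]) measurable
    then show "AE w in P. YA (Suc n) w \<le> YA n w" by (auto elim: AE_mp simp: ennreal_eq_0_iff)
  qed
qed

lemma upE_le_add:
  fixes f g h :: "('d::finite) path \<Rightarrow> ennreal"
  assumes PP: "prob_family PP" and "f \<in> borel_measurable Omega_borel" "g \<in> borel_measurable Omega_borel"
    and le: "\<And>w. h w \<le> f w + g w"
  shows "upE PP h \<le> upE PP f + upE PP g"
  unfolding upE_def[of PP h]
proof (rule SUP_least)
  fix Q assume Q: "Q \<in> PP"
  have [measurable]: "f \<in> borel_measurable Q" "g \<in> borel_measurable Q"
    using assms(2,3) prob_familyD(2)[OF PP Q] by (simp_all cong: measurable_cong_sets)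
  have "(\<integral>\<^sup>+w. h w \<partial>Q) \<le> (\<integral>\<^sup>+w. f w + g w \<partial>Q)" by (intro nn_integral_mono le)
  also have "\<dots> = (\<integral>\<^sup>+w. f w \<partial>Q) + (\<integral>\<^sup>+w. g w \<partial>Q)" by (rule nn_integral_add) measurable
  also have "\<dots> \<le> upE PP f + upE PP g" by (intro add_mono nn_integral_le_upE Q)
  finally show "(\<integral>\<^sup>+w. h w \<partial>Q) \<le> upE PP f + upE PP g" .
qed

lemma L1G_pos_part_diff_approx:
  assumes PP: "prob_family PP" and A: "A \<in> L1G PP {0..}" and B: "B \<in> L1G PP {0..}" and \<delta>: "\<delta> > 0"
  shows "\<exists>C. C \<in> bLip_cyl {0..} \<and> (\<forall>w. C w \<ge> 0) \<and>
    upE PP (\<lambda>w. ennreal \<bar>C w - max (A w - B w) 0\<bar>) < ennreal \<delta>"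
proof -
  obtain Ak where Ak: "\<forall>k. Ak k \<in> bLip_cyl {0..}" "(\<lambda>k. upE PP (\<lambda>w. ennreal \<bar>Ak k w - A w\<bar>)) \<longlonglongrightarrow> 0"
    using A unfolding L1G_def by blast
  obtain Bk where Bk: "\<forall>k. Bk k \<in> bLip_cyl {0..}" "(\<lambda>k. upE PP (\<lambda>w. ennreal \<bar>Bk k w - B w\<bar>)) \<longlonglongrightarrow> 0"
    using B unfolding L1G_def by blast
  have "(\<lambda>k. upE PP (\<lambda>w. ennreal \<bar>Ak k w - A w\<bar>) + upE PP (\<lambda>w. ennreal \<bar>Bk k w - B w\<bar>)) \<longlonglongrightarrow> 0 + 0"
    by (intro tendsto_add Ak(2) Bk(2))
  then have "\<forall>\<^sub>F k in sequentially.
      upE PP (\<lambda>w. ennreal \<bar>Ak k w - A w\<bar>) + upE PP (\<lambda>w. ennreal \<bar>Bk k w - B w\<bar>) < ennreal \<delta>"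
    using \<delta> by (intro order_tendstoD(2)) auto
  then obtain k where k:
    "upE PP (\<lambda>w. ennreal \<bar>Ak k w - A w\<bar>) + upE PP (\<lambda>w. ennreal \<bar>Bk k w - B w\<bar>) < ennreal \<delta>"
    unfolding eventually_sequentially by blast
  have [measurable]: "Ak k \<in> borel_measurable Omega_borel" "Bk k \<in> borel_measurable Omega_borel"
    "A \<in> borel_measurable Omega_borel" "B \<in> borel_measurable Omega_borel"
    using Ak(1) Bk(1) A B by (auto intro: bLip_cyl_measurable L1G_measurable)
  define C where "C = (\<lambda>w. max (Ak k w - Bk k w) 0)"
  have "C \<in> bLip_cyl {0..}" unfolding C_def using Ak(1) Bk(1) by (intro bLip_cyl_pos_part bLip_cyl_diff) auto
  moreover have "upE PP (\<lambda>w. ennreal \<bar>C w - max (A w - B w) 0\<bar>)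
      \<le> upE PP (\<lambda>w. ennreal \<bar>Ak k w - A w\<bar>) + upE PP (\<lambda>w. ennreal \<bar>Bk k w - B w\<bar>)"
  proof (rule upE_le_add[OF PP])
    fix w
    have "\<bar>C w - max (A w - B w) 0\<bar> \<le> \<bar>Ak k w - A w\<bar> + \<bar>Bk k w - B w\<bar>"
      unfolding C_def by (auto simp: max_def abs_if)
    then show "ennreal \<bar>C w - max (A w - B w) 0\<bar> \<le> ennreal \<bar>Ak k w - A w\<bar> + ennreal \<bar>Bk k w - B w\<bar>"
      by (simp add: ennreal_plus[symmetric] ennreal_leI del: ennreal_plus)
  qed measurable
  ultimately show ?thesis using k unfolding C_def by (intro exI[of _ C]) (auto simp: C_def)
qed

lemma qs_exists_le_add:
  assumes PP: "prob_family PP" and ne: "PP \<noteq> {}"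
    and mYA: "\<And>n. YA n \<in> borel_measurable Omega_borel" and mYB: "YB \<in> borel_measurable Omega_borel"
    and c: "c > 0" and u: "u \<longlonglongrightarrow> 0"
    and bound: "\<And>P n. P \<in> PP \<Longrightarrow> (\<integral>\<^sup>+w. ennreal (YA n w - YB w) \<partial>P) \<le> u n"
  shows "qs PP (\<lambda>w. \<exists>n. YA n w \<le> YB w + c)"
proof -
  define N where "N = {w\<in>Omega. \<forall>n. YB w + c < YA n w}"
  have N: "N \<in> sets Omega_borel"
  proof -
    have "{w\<in>space Omega_borel. \<forall>n. YB w + c < YA n w} \<in> sets Omega_borel"
      using mYA mYB by measurable
    then show ?thesis unfolding N_def by (simp add: space_Omega_borel)
  qed
  show ?thesis
  proof (rule qsI[OF PP ne N])
    show "\<forall>w\<in>Omega - N. \<exists>n. YA n w \<le> YB w + c" unfolding N_def by (auto simp: not_less)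
  next
    fix P assume P: "P \<in> PP"
    have "ennreal c * emeasure P N \<le> 0 + u n" for n
    proof -
      have "ennreal c * emeasure P N = (\<integral>\<^sup>+w. ennreal c * indicator N w \<partial>P)"
        using N prob_familyD(2)[OF PP P] by (simp add: nn_integral_cmult_indicator)
      also have "\<dots> \<le> (\<integral>\<^sup>+w. ennreal (YA n w - YB w) \<partial>P)"
      proof (intro nn_integral_mono)
        fix w
        have "c \<le> YA n w - YB w" if "w \<in> N" using that unfolding N_def by (smt (verit) mem_Collect_eq)
        then show "ennreal c * indicator N w \<le> ennreal (YA n w - YB w)"
          by (cases "w \<in> N") (simp_all add: ennreal_leI)
      qed
      also have "\<dots> \<le> u n" by (rule bound[OF P])
      finally show ?thesis by simp
    qed
    then have "ennreal c * emeasure P N \<le> 0" by (rule ennreal_le_of_le_add_tendsto_zero[OF _ u])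
    then show "emeasure P N = 0" using c by (simp add: ennreal_eq_0_iff)
  qed
qed
lemma cond_exp_interlaced_qs:
  assumes GS: "G_setting G E PP" and t: "t \<ge> 0"
    and A: "\<And>n. A n \<in> L1G PP {0..}" "\<And>n. cond_exp E PP t (A n) (YA n)" "decr_qs PP A X"
    and B: "\<And>n. B n \<in> L1G PP {0..}" "\<And>n. cond_exp E PP t (B n) (YB n)" "decr_qs PP B X"
  shows "qs PP (\<lambda>w. \<forall>m j. \<exists>n. YA n w \<le> YB m w + 1 / real (Suc j))"
proof -
  have PP: "prob_family PP" and ne: "PP \<noteq> {}" using G_settingD[OF GS] G_setting_nonempty[OF GS] by auto
  have [measurable]: "A n \<in> borel_measurable Omega_borel" "B n \<in> borel_measurable Omega_borel" for n
    using A(1) B(1) by (auto intro: L1G_measurable)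
  have "qs PP (\<lambda>w. \<exists>n. YA n w \<le> YB m w + 1 / real (Suc j))" for m j
  proof (rule qs_exists_le_add[OF PP ne cond_exp_measurable[OF A(2)] cond_exp_measurable[OF B(2)]])
    show "(\<lambda>n. upE PP (\<lambda>w. ennreal (max (A n w - B m w) 0))) \<longlonglongrightarrow> 0"
    proof (rule upE_tendsto_zero[OF GS])
      fix P assume P: "P \<in> PP"
      show "AE w in P. (\<forall>n. max (A (Suc n) w - B m w) 0 \<le> max (A n w - B m w) 0)
          \<and> (\<lambda>n. max (A n w - B m w) 0) \<longlonglongrightarrow> 0"
        using qs_imp_AE[OF PP A(3)[unfolded decr_qs_def] P] qs_imp_AE[OF PP B(3)[unfolded decr_qs_def] P]
        by eventually_elim (rule pos_part_diff_tendsto_zero, auto)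
    qed (auto intro: L1G_pos_part_diff_approx[OF PP A(1) B(1)])
  next
    fix P n assume P: "P \<in> PP"
    have "(\<integral>\<^sup>+w. ennreal (YA n w - YB m w) \<partial>P) \<le> upE PP (\<lambda>w. ennreal (A n w - B m w))"
      by (rule nn_integral_cond_exp_diff_le_upE[OF GS t P A(2) B(2)])
    then show "(\<integral>\<^sup>+w. ennreal (YA n w - YB m w) \<partial>P) \<le> upE PP (\<lambda>w. ennreal (max (A n w - B m w) 0))"
      by (simp add: ennreal_max_0')
  qed simp
  then show ?thesis by (intro qs_all[OF PP ne]) blast
qed

theorem proposition3p3:
  fixes G :: "real^'d^'d \<Rightarrow> real"
    and E :: "(('d::finite) path \<Rightarrow> real) \<Rightarrow> real"
    and PP :: "'d path measure set"
    and X :: "'d path \<Rightarrow> ereal"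
    and Xn Xt Y Yt :: "nat \<Rightarrow> 'd path \<Rightarrow> real"
    and t :: real
  assumes "G_setting G E PP"
    and "X \<in> L1G_star PP"
    and "\<forall>n. Xn n \<in> L1G PP {0..}"
    and "\<forall>n. Xt n \<in> L1G PP {0..}"
    and "decr_qs PP Xn X"
    and "decr_qs PP Xt X"
    and "t \<ge> 0"
    and "\<forall>n. cond_exp E PP t (Xn n) (Y n)"
    and "\<forall>n. cond_exp E PP t (Xt n) (Yt n)"
  shows "qs PP (\<lambda>w. \<exists>L. (\<lambda>n. ereal (Y n w)) \<longlonglongrightarrow> L \<and> (\<lambda>n. ereal (Yt n w)) \<longlonglongrightarrow> L)"
proof -
  note GS = assms(1) and t = assms(7)
  have PP: "prob_family PP" and ne: "PP \<noteq> {}" using G_settingD[OF GS] G_setting_nonempty[OF GS] by auto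
  have dec: "qs PP (\<lambda>w. \<forall>n. Xn (Suc n) w \<le> Xn n w)" "qs PP (\<lambda>w. \<forall>n. Xt (Suc n) w \<le> Xt n w)"
    using assms(5,6) unfolding decr_qs_def by (auto elim: qs_mono)
  have "qs PP (\<lambda>w. \<forall>n. Y (Suc n) w \<le> Y n w)"
    by (rule cond_exp_decreasing_qs[OF GS t _ dec(1)]) (use assms(8) in blast)
  moreover have "qs PP (\<lambda>w. \<forall>n. Yt (Suc n) w \<le> Yt n w)"
    by (rule cond_exp_decreasing_qs[OF GS t _ dec(2)]) (use assms(9) in blast)
  moreover have "qs PP (\<lambda>w. \<forall>m j. \<exists>n. Y n w \<le> Yt m w + 1 / real (Suc j))"
    by (rule cond_exp_interlaced_qs[OF GS t]) (use assms in blast)+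
  moreover have "qs PP (\<lambda>w. \<forall>m j. \<exists>n. Yt n w \<le> Y m w + 1 / real (Suc j))"
    by (rule cond_exp_interlaced_qs[OF GS t]) (use assms in blast)+
  ultimately have "qs PP (\<lambda>w. (\<forall>n. Y (Suc n) w \<le> Y n w) \<and> (\<forall>n. Yt (Suc n) w \<le> Yt n w) \<and>
      (\<forall>m j. \<exists>n. Y n w \<le> Yt m w + 1 / real (Suc j)) \<and> (\<forall>m j. \<exists>n. Yt n w \<le> Y m w + 1 / real (Suc j)))"
    by (intro qs_conj[OF PP ne])
  then show ?thesis
    by (rule qs_mono) (use decreasing_interlaced_same_limit[of "\<lambda>n. Y n w" "\<lambda>n. Yt n w" for w] in simp)
qed

end
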